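(* Let $n\in\mathbb N$. (a) Suppose that for every finite set $I$ we are given a covariant $n$-tensor field $\tilde\Theta^n_I$ on $\mathcal M_+(I)$. Then $(\tilde\Theta^n_I)$ is a congruent family if and only if there are functions $a_{\mathbf P}:(0,\infty)\to\mathbb R$, $\mathbf P$ ranging over all partitions of $\{1,\dots,n\}$, such that $(\tilde\Theta^n_I)_\mu=\sum_{\mathbf P}a_{\mathbf P}(\|\mu\|)(\tau^{\mathbf P}_I)_\mu$ for all finite $I$ and $\mu\in\mathcal M_+(I)$. (b) Suppose that for every finite set $I$ we are given a covariant $n$-tensor field $\Theta^n_I$ on $\mathcal P_+(I)$. Then $(\Theta^n_I)$ is a congruent family if and only if there are constants $c_{\mathbf P}\in\mathbb R$, $\mathbf P=\{P_1,\dots,P_l\}$ ranging over the partitions of $\{1,\dots,n\}$ with $|P_i|>1$ for all $i$, such that $\Theta^n_I=\sum_{\mathbf P}c_{\mathbf P}\,\tau^{\mathbf P}_I|_{\mathcal P_+(I)}$ for all finite $I$.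
   Context: For a finite set $I$, $\mathcal S(I)=\{\sum_{i\in I}x_i\delta_i:x_i\in\mathbb R\}$ (signed measures), $\|\sum x_i\delta_i\|=\sum|x_i|$, $\mathcal M_+(I)=\{\sum\mu_i\delta_i:\mu_i>0\}$ (open in $\mathcal S(I)$, tangent space $\mathcal S(I)$), $\mathcal P_+(I)=\{\mu\in\mathcal M_+(I):\sum\mu_i=1\}$ (tangent space $\mathcal S_0(I)=\{\sum x_i\delta_i:\sum x_i=0\}$). A covariant $n$-tensor field is a continuously varying family of $n$-multilinear forms on the tangent spaces. For $\mu=\sum\mu_i\delta_i\in\mathcal M_+(I)$ and $V_k=\sum_iV_k^i\delta_i$, the canonical tensor is $(\tau^m_I)_\mu(V_1,\dots,V_m)=\sum_{i\in I}\mu_i^{1-m}V_1^i\cdots V_m^i$; for a partition $\mathbf P=\{P_1,\dots,P_l\}$ of $\{1,\dots,n\}$, $(\tau^{\mathbf P}_I)_\mu(V_1,\dots,V_n)=\prod_{i=1}^l(\tau^{|P_i|}_I)_\mu((V_j)_{j\in P_i})$. A Markov kernel $K:I\to\mathcal P(I')$ between finite sets is given by $K(i)=\sum_{i'}K^i_{i'}\delta_{i'}$ with $K^i_{i'}\ge0$, $\sum_{i'}K^i_{i'}=1$, and $K_*(\sum x_i\delta_i)=\sum_{i,i'}K^i_{i'}x_i\delta_{i'}$; it is congruent if there is a map $\kappa:I'\to I$ with $K^i_{i'}=0$ whenever $\kappa(i')\ne i$. The family $(\tilde\Theta^n_I)$ is congruent if $K^*\tilde\Theta^n_{I'}=\tilde\Theta^n_I$,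 i.e. $(\tilde\Theta^n_{I'})_{K_*\mu}(K_*V_1,\dots,K_*V_n)=(\tilde\Theta^n_I)_\mu(V_1,\dots,V_n)$, for every congruent Markov kernel $K:I\to\mathcal P(I')$ between finite sets for which $K_*$ maps $\mathcal M_+(I)$ into $\mathcal M_+(I')$ (so that the pullback is defined); analogously on $\mathcal P_+(I)$ with tangent vectors in $\mathcal S_0(I)$. *)

theory Defs
  imports "HOL-Analysis.Analysis" "HOL-Library.Disjoint_Sets"
begin

text \<open>Finite sets I are finite nonempty subsets of nat. A (signed) measure on I is a
function nat => real vanishing outside I. Tangent vectors V_1..V_n are given as a list of length n.\<close>

definition Sm :: "nat set \<Rightarrow> (nat \<Rightarrow> real) set" where
  "Sm I = {x. \<forall>i. i \<notin> I \<longrightarrow> x i = 0}"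

definition S0 :: "nat set \<Rightarrow> (nat \<Rightarrow> real) set" where
  "S0 I = {x \<in> Sm I. (\<Sum>i\<in>I. x i) = 0}"

definition Mplus :: "nat set \<Rightarrow> (nat \<Rightarrow> real) set" where
  "Mplus I = {mu \<in> Sm I. \<forall>i\<in>I. mu i > 0}"

definition Pplus :: "nat set \<Rightarrow> (nat \<Rightarrow> real) set" where
  "Pplus I = {mu \<in> Mplus I. (\<Sum>i\<in>I. mu i) = 1}"

definition mnorm :: "nat set \<Rightarrow> (nat \<Rightarrow> real) \<Rightarrow> real" where
  "mnorm I x = (\<Sum>i\<in>I. \<bar>x i\<bar>)"

definition tensor_field ::
  "(nat \<Rightarrow> real) set \<Rightarrow> (nat \<Rightarrow> real) set \<Rightarrow> nat
     \<Rightarrow> ((nat \<Rightarrow> real) \<Rightarrow> (nat \<Rightarrow> real) list \<Rightarrow> real) \<Rightarrow> bool" where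
  "tensor_field U T n Th \<longleftrightarrow>
     (\<forall>Vs. length Vs = n \<and> set Vs \<subseteq> T \<longrightarrow> continuous_on U (\<lambda>mu. Th mu Vs)) \<and>
     (\<forall>mu\<in>U. \<forall>Vs k v w a b. length Vs = n \<and> set Vs \<subseteq> T \<and> k < n \<and> v \<in> T \<and> w \<in> T \<longrightarrow>
        Th mu (Vs[k := (\<lambda>i. a * v i + b * w i)]) = a * Th mu (Vs[k := v]) + b * Th mu (Vs[k := w]))"

definition tau_block :: "nat set \<Rightarrow> (nat \<Rightarrow> real) \<Rightarrow> (nat \<Rightarrow> real) list \<Rightarrow> nat set \<Rightarrow> real" where
  "tau_block I mu Vs B = (\<Sum>i\<in>I. mu i powi (1 - int (card B)) * (\<Prod>k\<in>B. (Vs ! k) i))"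

definition tau_part :: "nat set \<Rightarrow> (nat \<Rightarrow> real) \<Rightarrow> (nat \<Rightarrow> real) list \<Rightarrow> nat set set \<Rightarrow> real" where
  "tau_part I mu Vs P = (\<Prod>B\<in>P. tau_block I mu Vs B)"

text \<open>Partitions of the index set {0..<n} (playing the role of {1,...,n}).\<close>
definition partitions :: "nat \<Rightarrow> nat set set set" where
  "partitions n = {P. partition_on {0..<n} P}"

definition congruent_kernel :: "nat set \<Rightarrow> nat set \<Rightarrow> (nat \<Rightarrow> nat \<Rightarrow> real) \<Rightarrow> bool" where
  "congruent_kernel I I' K \<longleftrightarrow>
     (\<forall>i\<in>I. \<forall>i'\<in>I'. 0 \<le> K i i') \<and> (\<forall>i\<in>I. (\<Sum>i'\<in>I'. K i i') = 1) \<and>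
     (\<exists>\<kappa>. \<kappa> ` I' \<subseteq> I \<and> (\<forall>i\<in>I. \<forall>i'\<in>I'. \<kappa> i' \<noteq> i \<longrightarrow> K i i' = 0))"

definition push :: "nat set \<Rightarrow> nat set \<Rightarrow> (nat \<Rightarrow> nat \<Rightarrow> real) \<Rightarrow> (nat \<Rightarrow> real) \<Rightarrow> (nat \<Rightarrow> real)" where
  "push I I' K x = (\<lambda>i'. if i' \<in> I' then (\<Sum>i\<in>I. K i i' * x i) else 0)"

definition congruent_family_M :: "nat \<Rightarrow> (nat set \<Rightarrow> (nat \<Rightarrow> real) \<Rightarrow> (nat \<Rightarrow> real) list \<Rightarrow> real) \<Rightarrow> bool" where
  "congruent_family_M n Th \<longleftrightarrow>
     (\<forall>I I' K. finite I \<and> I \<noteq> {} \<and> finite I' \<and> I' \<noteq> {} \<and> congruent_kernel I I' K \<and>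
        push I I' K ` Mplus I \<subseteq> Mplus I' \<longrightarrow>
        (\<forall>mu\<in>Mplus I. \<forall>Vs. length Vs = n \<and> set Vs \<subseteq> Sm I \<longrightarrow>
           Th I' (push I I' K mu) (map (push I I' K) Vs) = Th I mu Vs))"

definition congruent_family_P :: "nat \<Rightarrow> (nat set \<Rightarrow> (nat \<Rightarrow> real) \<Rightarrow> (nat \<Rightarrow> real) list \<Rightarrow> real) \<Rightarrow> bool" where
  "congruent_family_P n Th \<longleftrightarrow>
     (\<forall>I I' K. finite I \<and> I \<noteq> {} \<and> finite I' \<and> I' \<noteq> {} \<and> congruent_kernel I I' K \<and>
        push I I' K ` Pplus I \<subseteq> Pplus I' \<longrightarrow>
        (\<forall>mu\<in>Pplus I. \<forall>Vs. length Vs = n \<and> set Vs \<subseteq> S0 I \<longrightarrow>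
           Th I' (push I I' K mu) (map (push I I' K) Vs) = Th I mu Vs))"

end

theory Submission
  imports Defs
begin

text \<open>By multilinearity a tensor at \<open>\<mu>\<close> is determined by its values on tuples of Dirac vectors
  \<open>\<delta>\<^sub>i\<^sub>1, \<dots>, \<delta>\<^sub>i\<^sub>n\<close>. At a uniform measure, permutation kernels show that such a value depends only on
  the partition of \<open>{1, \<dots>, n}\<close> into the fibres of \<open>k \<mapsto> i\<^sub>k\<close>, while \<open>\<tau>\<^sup>P\<close> evaluates to a nonzero
  weight exactly when \<open>P\<close> refines that partition; this unitriangular system determines the
  coefficients. Splitting kernels carry a uniform measure on \<open>n + 1\<close> points and any measure with
  rational weights of the same total mass to a common uniform measure, which transfers the
  coefficients, and continuity extends the expansion to all of \<open>\<M>\<^sub>+(I)\<close>. For (b), a congruent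
  family on \<open>\<P>\<^sub>+\<close> extends congruently to \<open>\<M>\<^sub>+\<close> by evaluating at \<open>\<mu>/\<parallel>\<mu>\<parallel>\<close> on the projections of
  the vectors to \<open>\<S>\<^sub>0\<close>, and every \<open>\<tau>\<^sup>P\<close> with a singleton block vanishes on \<open>\<S>\<^sub>0\<close>.\<close>

section \<open>Multilinear forms\<close>

definition multilinear_on :: "(nat \<Rightarrow> real) set \<Rightarrow> nat \<Rightarrow> ((nat \<Rightarrow> real) list \<Rightarrow> real) \<Rightarrow> bool" where
  "multilinear_on T n F \<longleftrightarrow> (\<forall>Vs k v w a b. length Vs = n \<and> set Vs \<subseteq> T \<and> k < n \<and> v \<in> T \<and> w \<in> T \<longrightarrow>
     F (Vs[k := (\<lambda>i. a * v i + b * w i)]) = a * F (Vs[k := v]) + b * F (Vs[k := w]))"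

definition lincomb_closed :: "(nat \<Rightarrow> real) set \<Rightarrow> bool" where
  "lincomb_closed T \<longleftrightarrow> (\<lambda>i. 0) \<in> T \<and> (\<forall>v w a b. v \<in> T \<longrightarrow> w \<in> T \<longrightarrow> (\<lambda>i. a * v i + b * w i) \<in> T)"

lemma tensor_field_multilinear_on: "tensor_field U T n Th \<Longrightarrow> mu \<in> U \<Longrightarrow> multilinear_on T n (Th mu)"
  unfolding tensor_field_def multilinear_on_def by blast

lemma tensor_fieldI:
  assumes "\<And>Vs. length Vs = n \<Longrightarrow> set Vs \<subseteq> T \<Longrightarrow> continuous_on U (\<lambda>mu. Th mu Vs)"
    and "\<And>mu. mu \<in> U \<Longrightarrow> multilinear_on T n (Th mu)"
  shows "tensor_field U T n Th"
  using assms unfolding tensor_field_def multilinear_on_def by blast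

lemma lincomb_closed_Sm: "lincomb_closed (Sm I)"
  unfolding lincomb_closed_def Sm_def by auto

lemma lincomb_closed_S0: "lincomb_closed (S0 I)"
  unfolding lincomb_closed_def S0_def Sm_def by (auto simp: sum.distrib sum_distrib_left[symmetric])

lemma lincomb_closed_sum:
  assumes "lincomb_closed T" "finite J" "\<And>j. j \<in> J \<Longrightarrow> b j \<in> T"
  shows "(\<lambda>i. \<Sum>j\<in>J. c j * b j i) \<in> T"
  using assms(2,3)
proof (induction J rule: finite_induct)
  case empty
  then show ?case using assms(1) by (simp add: lincomb_closed_def)
next
  case (insert x J)
  then have "(\<lambda>i. c x * b x i + 1 * (\<Sum>j\<in>J. c j * b j i)) \<in> T"
    using assms(1) unfolding lincomb_closed_def by blast
  then show ?case using insert by simp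
qed

lemma multilinear_on_sum:
  assumes F: "multilinear_on T n F" and T: "lincomb_closed T"
    and Vs: "length Vs = n" "set Vs \<subseteq> T" "k < n" and "finite J" "\<And>j. j \<in> J \<Longrightarrow> b j \<in> T"
  shows "F (Vs[k := (\<lambda>i. \<Sum>j\<in>J. c j * b j i)]) = (\<Sum>j\<in>J. c j * F (Vs[k := b j]))"
  using \<open>finite J\<close> \<open>\<And>j. j \<in> J \<Longrightarrow> b j \<in> T\<close>
proof (induction J rule: finite_induct)
  case empty
  have "(\<lambda>i. 0::real) \<in> T" using T by (simp add: lincomb_closed_def)
  then have "F (Vs[k := (\<lambda>i. 0 * 0 + 0 * 0)]) = 0 * F (Vs[k := (\<lambda>i. 0)]) + 0 * F (Vs[k := (\<lambda>i. 0)])"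
    using F Vs unfolding multilinear_on_def by blast
  then show ?case by simp
next
  case (insert x J)
  have "(\<lambda>i. \<Sum>j\<in>J. c j * b j i) \<in> T" using lincomb_closed_sum[OF T insert(1)] insert by blast
  then have "F (Vs[k := (\<lambda>i. c x * b x i + 1 * (\<Sum>j\<in>J. c j * b j i))]) =
      c x * F (Vs[k := b x]) + 1 * F (Vs[k := (\<lambda>i. \<Sum>j\<in>J. c j * b j i)])"
    using F Vs insert.prems unfolding multilinear_on_def by blast
  then show ?case using insert by simp
qed

lemma multilinear_on_lincomb:
  assumes "finite S" "\<And>P. P \<in> S \<Longrightarrow> multilinear_on T n (F P)"
  shows "multilinear_on T n (\<lambda>Vs. \<Sum>P\<in>S. a P * F P Vs)"
  using assms unfolding multilinear_on_def
  by (simp add: sum_distrib_left sum.distrib algebra_simps)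

lemma sum_PiE_insert:
  assumes "x \<notin> S"
  shows "(\<Sum>g\<in>PiE (insert x S) T. h g) = (\<Sum>y\<in>T x. \<Sum>g\<in>PiE S T. h (g(x := y)))"
proof -
  have "(\<Sum>g\<in>PiE (insert x S) T. h g) = (\<Sum>(y, g)\<in>T x \<times> PiE S T. h (g(x := y)))"
    unfolding PiE_insert_eq by (subst sum.reindex[OF inj_combinator[OF assms]]) (simp add: case_prod_beta)
  then show ?thesis by (simp add: sum.cartesian_product)
qed

lemma multilinear_on_expand_prefix:
  assumes F: "multilinear_on T n F" and T: "lincomb_closed T"
    and Vs: "length Vs = n" "set Vs \<subseteq> T" and J: "finite J" "\<And>j. j \<in> J \<Longrightarrow> b j \<in> T"
    and V: "\<And>k. k < n \<Longrightarrow> Vs ! k = (\<lambda>i. \<Sum>j\<in>J. x k j * b j i)"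
    and "m \<le> n"
  shows "F Vs = (\<Sum>g\<in>PiE {0..<m} (\<lambda>_. J). (\<Prod>k<m. x k (g k)) *
            F (map (\<lambda>k. if k < m then b (g k) else Vs ! k) [0..<n]))"
  using \<open>m \<le> n\<close>
proof (induction m)
  case 0
  then show ?case using Vs(1) map_nth[of Vs] by simp
next
  case (Suc m)
  define G where
    "G g = (\<Prod>k<Suc m. x k (g k)) * F (map (\<lambda>k. if k < Suc m then b (g k) else Vs ! k) [0..<n])" for g
  have step: "(\<Prod>k<m. x k (g k)) * F (map (\<lambda>k. if k < m then b (g k) else Vs ! k) [0..<n]) =
      (\<Sum>j\<in>J. G (g(m := j)))" if g: "g \<in> PiE {0..<m} (\<lambda>_. J)" for g
  proof -
    let ?W = "map (\<lambda>k. if k < m then b (g k) else Vs ! k) [0..<n]"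
    have WT: "set ?W \<subseteq> T" using g J(2) Vs Suc.prems by (auto simp: PiE_iff)
    have "?W = ?W[m := (\<lambda>i. \<Sum>j\<in>J. x m j * b j i)]"
      using Suc.prems V[of m] by (intro nth_equalityI) (auto simp: nth_list_update)
    then have "F ?W = (\<Sum>j\<in>J. x m j * F (?W[m := b j]))"
      using multilinear_on_sum[where k=m and c="x m" and b=b and J=J, OF F T _ WT _ J] Suc.prems by simp
    moreover have "?W[m := b j] = map (\<lambda>k. if k < Suc m then b ((g(m := j)) k) else Vs ! k) [0..<n]" for j
      using Suc.prems by (intro nth_equalityI) (auto simp: nth_list_update)
    moreover have "(\<Prod>k<Suc m. x k ((g(m := j)) k)) = (\<Prod>k<m. x k (g k)) * x m j" for j
      by (simp add: lessThan_Suc)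
    ultimately show ?thesis unfolding G_def by (simp add: sum_distrib_left mult_ac)
  qed
  have "F Vs = (\<Sum>g\<in>PiE {0..<m} (\<lambda>_. J). \<Sum>j\<in>J. G (g(m := j)))"
    using Suc step by (simp cong: sum.cong)
  also have "\<dots> = (\<Sum>g\<in>PiE {0..<Suc m} (\<lambda>_. J). G g)"
    unfolding atLeast0_lessThan_Suc by (simp add: sum_PiE_insert sum.swap[of _ J])
  finally show ?case unfolding G_def .
qed

lemma multilinear_on_expand:
  assumes "multilinear_on T n F" "lincomb_closed T" "length Vs = n" "set Vs \<subseteq> T"
    "finite J" "\<And>j. j \<in> J \<Longrightarrow> b j \<in> T" "\<And>k. k < n \<Longrightarrow> Vs ! k = (\<lambda>i. \<Sum>j\<in>J. x k j * b j i)"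
  shows "F Vs = (\<Sum>g\<in>PiE {0..<n} (\<lambda>_. J). (\<Prod>k<n. x k (g k)) * F (map (\<lambda>k. b (g k)) [0..<n]))"
proof -
  have "F Vs = (\<Sum>g\<in>PiE {0..<n} (\<lambda>_. J). (\<Prod>k<n. x k (g k)) *
      F (map (\<lambda>k. if k < n then b (g k) else Vs ! k) [0..<n]))"
    using multilinear_on_expand_prefix[OF assms order_refl] .
  also have "\<dots> = (\<Sum>g\<in>PiE {0..<n} (\<lambda>_. J). (\<Prod>k<n. x k (g k)) * F (map (\<lambda>k. b (g k)) [0..<n]))"
    by (intro sum.cong refl arg_cong2[where f="(*)"] arg_cong[where f=F] map_cong) auto
  finally show ?thesis .
qed

section \<open>Canonical tensors\<close>

lemma finite_partitions: "finite (partitions n)"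
  unfolding partitions_def using finitely_many_partition_on[of "{0..<n}"] by simp

lemma finite_partition_blocks: "P \<in> partitions n \<Longrightarrow> finite P"
  unfolding partitions_def using finite_elements[of "{0..<n}" P] by simp

lemma partition_blockD: "P \<in> partitions n \<Longrightarrow> B \<in> P \<Longrightarrow> B \<subseteq> {0..<n} \<and> B \<noteq> {} \<and> finite B"
  unfolding partitions_def using partition_onD1[of "{0..<n}" P] partition_onD3[of "{0..<n}" P]
  by (auto intro: finite_subset)

lemma partition_block_ex1: "P \<in> partitions n \<Longrightarrow> k < n \<Longrightarrow> \<exists>!B. B \<in> P \<and> k \<in> B"
  unfolding partitions_def using partition_onD1[of "{0..<n}" P] partition_onD2[of "{0..<n}" P]
  by (auto simp: disjoint_def)

lemma card_partition_le: "Q \<in> partitions n \<Longrightarrow> card Q \<le> n"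
proof -
  assume Q: "Q \<in> partitions n"
  have "(\<Sum>B\<in>Q. 1) \<le> (\<Sum>B\<in>Q. card B)"
    by (intro sum_mono) (use partition_blockD[OF Q] in \<open>auto simp: Suc_le_eq card_gt_0_iff\<close>)
  also have "\<dots> = card {0..<n}"
    using Q partition_blockD[OF Q] unfolding partitions_def by (intro product_partition[symmetric]) auto
  finally show ?thesis by simp
qed

lemma tau_block_list_update_notin:
  "k \<notin> B \<Longrightarrow> tau_block I mu (Vs[k := v]) B = tau_block I mu Vs B"
  unfolding tau_block_def by (intro sum.cong refl arg_cong2[where f="(*)"] prod.cong) (metis nth_list_update_neq)

lemma tau_block_list_update_lincomb:
  assumes "k \<in> B" "finite B" "k < length Vs"
  shows "tau_block I mu (Vs[k := (\<lambda>i. a * v i + b * w i)]) B =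
     a * tau_block I mu (Vs[k := v]) B + b * tau_block I mu (Vs[k := w]) B"
proof -
  have split: "(\<Prod>j\<in>B. ((Vs[k := u]) ! j) i) = u i * (\<Prod>j\<in>B-{k}. (Vs ! j) i)" for u :: "nat \<Rightarrow> real" and i
    using assms by (simp add: prod.remove)
  show ?thesis unfolding tau_block_def split
    by (simp add: sum_distrib_left sum.distrib[symmetric] algebra_simps)
qed

lemma tau_part_multilinear_on: "P \<in> partitions n \<Longrightarrow> multilinear_on T n (\<lambda>Vs. tau_part I mu Vs P)"
  unfolding multilinear_on_def
proof (intro allI impI)
  fix Vs k v w a b
  assume P: "P \<in> partitions n" and h: "length Vs = n \<and> set Vs \<subseteq> T \<and> k < n \<and> v \<in> T \<and> w \<in> T"
  obtain B0 where B0: "B0 \<in> P" "k \<in> B0" using partition_block_ex1[OF P] h by blast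
  have other: "k \<notin> B" if "B \<in> P - {B0}" for B using partition_block_ex1[OF P, of k] h B0 that by auto
  have split: "tau_part I mu W P = tau_block I mu W B0 * (\<Prod>B\<in>P-{B0}. tau_block I mu W B)" for W
    unfolding tau_part_def using finite_partition_blocks[OF P] B0 by (simp add: prod.remove)
  have rest: "(\<Prod>B\<in>P-{B0}. tau_block I mu (Vs[k := u]) B) = (\<Prod>B\<in>P-{B0}. tau_block I mu Vs B)" for u
    by (intro prod.cong refl tau_block_list_update_notin other)
  have "tau_block I mu (Vs[k := (\<lambda>i. a * v i + b * w i)]) B0 =
     a * tau_block I mu (Vs[k := v]) B0 + b * tau_block I mu (Vs[k := w]) B0"
    using tau_block_list_update_lincomb B0 partition_blockD[OF P B0(1)] h by auto
  then show "tau_part I mu (Vs[k := (\<lambda>i. a * v i + b * w i)]) P =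
        a * tau_part I mu (Vs[k := v]) P + b * tau_part I mu (Vs[k := w]) P"
    unfolding split rest by (simp add: distrib_right)
qed

lemma tau_part_tendsto:
  assumes "finite I" "\<And>i. i \<in> I \<Longrightarrow> ((\<lambda>j. nu j i) \<longlongrightarrow> mu i) F" "\<And>i. i \<in> I \<Longrightarrow> mu i \<noteq> 0"
  shows "((\<lambda>j. tau_part I (nu j) Vs P) \<longlongrightarrow> tau_part I mu Vs P) F"
  unfolding tau_part_def tau_block_def
  by (intro tendsto_prod tendsto_sum tendsto_mult tendsto_const tendsto_power_int assms)

lemma tau_part_singleton_S0:
  assumes "P \<in> partitions n" "{k} \<in> P" "length Vs = n" "set Vs \<subseteq> S0 I"
  shows "tau_part I mu Vs P = 0"
proof -
  have "k < n" using partition_blockD[OF assms(1,2)] by auto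
  then have "Vs ! k \<in> S0 I" using assms(3,4) nth_mem by blast
  then have "tau_block I mu Vs {k} = 0" unfolding tau_block_def S0_def by simp
  then show ?thesis unfolding tau_part_def
    using finite_partition_blocks[OF assms(1)] assms(2) by (intro prod_zero) auto
qed

section \<open>Congruent Markov kernels\<close>

lemma push_eq_kappa:
  assumes "finite I" "\<kappa> ` I' \<subseteq> I" "\<forall>i\<in>I. \<forall>i'\<in>I'. \<kappa> i' \<noteq> i \<longrightarrow> K i i' = 0" "i' \<in> I'"
  shows "push I I' K x i' = K (\<kappa> i') i' * x (\<kappa> i')"
proof -
  have "\<kappa> i' \<in> I" using assms by auto
  then have "(\<Sum>i\<in>I. K i i' * x i) = K (\<kappa> i') i' * x (\<kappa> i') + (\<Sum>i\<in>I-{\<kappa> i'}. K i i' * x i)"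
    using assms(1) by (simp add: sum.remove)
  also have "(\<Sum>i\<in>I-{\<kappa> i'}. K i i' * x i) = 0" using assms(3,4) by (intro sum.neutral) auto
  finally show ?thesis using assms(4) by (simp add: push_def)
qed

lemma push_Sm: "push I I' K x \<in> Sm I'"
  unfolding push_def Sm_def by auto

lemma sum_push:
  assumes "congruent_kernel I I' K" "finite I'"
  shows "(\<Sum>i'\<in>I'. push I I' K x i') = (\<Sum>i\<in>I. x i)"
proof -
  have "(\<Sum>i'\<in>I'. push I I' K x i') = (\<Sum>i\<in>I. x i * (\<Sum>i'\<in>I'. K i i'))"
    unfolding push_def by (simp add: sum.swap[of _ I'] sum_distrib_left mult.commute)
  also have "\<dots> = (\<Sum>i\<in>I. x i)" using assms(1) unfolding congruent_kernel_def by simp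
  finally show ?thesis .
qed

lemma push_S0: "congruent_kernel I I' K \<Longrightarrow> finite I' \<Longrightarrow> V \<in> S0 I \<Longrightarrow> push I I' K V \<in> S0 I'"
  using sum_push[of I I' K V] push_Sm unfolding S0_def by auto

lemma push_Pplus:
  assumes "congruent_kernel I I' K" "finite I'" "push I I' K ` Mplus I \<subseteq> Mplus I'"
  shows "push I I' K ` Pplus I \<subseteq> Pplus I'"
  using assms sum_push[OF assms(1,2)] unfolding Pplus_def by auto

lemma mnorm_Mplus: "mu \<in> Mplus I \<Longrightarrow> mnorm I mu = (\<Sum>i\<in>I. mu i)"
  unfolding mnorm_def Mplus_def by (intro sum.cong refl) (simp add: abs_of_pos)

lemma mnorm_pos: "finite I \<Longrightarrow> I \<noteq> {} \<Longrightarrow> mu \<in> Mplus I \<Longrightarrow> mnorm I mu > 0"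
  using mnorm_Mplus[of mu I] unfolding Mplus_def by (auto intro!: sum_pos)

lemma mnorm_push:
  assumes "congruent_kernel I I' K" "finite I'" "mu \<in> Mplus I" "push I I' K mu \<in> Mplus I'"
  shows "mnorm I' (push I I' K mu) = mnorm I mu"
  using mnorm_Mplus[OF assms(3)] mnorm_Mplus[OF assms(4)] sum_push[OF assms(1,2)] by simp

lemma push_kernel_pos:
  assumes "finite I" "\<kappa> ` I' \<subseteq> I" "\<forall>i\<in>I. \<forall>i'\<in>I'. \<kappa> i' \<noteq> i \<longrightarrow> K i i' = 0"
    "mu \<in> Mplus I" "push I I' K mu \<in> Mplus I'" "i' \<in> I'"
  shows "K (\<kappa> i') i' > 0"
proof -
  have "0 < push I I' K mu i'" using assms(5,6) unfolding Mplus_def by auto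
  also have "\<dots> = K (\<kappa> i') i' * mu (\<kappa> i')" using push_eq_kappa[OF assms(1-3,6)] .
  finally have "0 < K (\<kappa> i') i' * mu (\<kappa> i')" .
  moreover have "mu (\<kappa> i') > 0" using assms(2,4,6) unfolding Mplus_def by auto
  ultimately show ?thesis by (simp add: zero_less_mult_iff)
qed

lemma power_int_scale_prod:
  fixes c a :: real
  assumes "c > 0" "finite B"
  shows "(c * a) powi (1 - int (card B)) * (\<Prod>k\<in>B. c * v k) = c * (a powi (1 - int (card B)) * (\<Prod>k\<in>B. v k))"
proof -
  have "c powi (1 - int (card B)) * c ^ card B = c"
    using assms power_int_add[of c "1 - int (card B)" "int (card B)"] by (simp add: power_int_of_nat)
  then show ?thesis by (simp add: power_int_mult_distrib prod.distrib mult_ac)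
qed

text \<open>A congruent kernel scales the atom \<open>\<kappa> i'\<close> by \<open>K\<^bsub>\<kappa> i', i'\<^esub>\<close>; the exponent \<open>1 - |B|\<close> makes each summand
  scale linearly, so the summands over the fibre of \<open>i\<close> add up to the summand at \<open>i\<close>.\<close>

lemma tau_block_push:
  assumes "finite I" "finite I'" "congruent_kernel I I' K" "mu \<in> Mplus I" "push I I' K mu \<in> Mplus I'"
    "B \<subseteq> {0..<length Vs}" "finite B"
  shows "tau_block I' (push I I' K mu) (map (push I I' K) Vs) B = tau_block I mu Vs B"
proof -
  obtain \<kappa> where \<kappa>: "\<kappa> ` I' \<subseteq> I" "\<forall>i\<in>I. \<forall>i'\<in>I'. \<kappa> i' \<noteq> i \<longrightarrow> K i i' = 0"
    using assms(3) unfolding congruent_kernel_def by blast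
  define g where "g i = mu i powi (1 - int (card B)) * (\<Prod>k\<in>B. (Vs ! k) i)" for i
  have "push I I' K mu i' powi (1 - int (card B)) * (\<Prod>k\<in>B. (map (push I I' K) Vs ! k) i')
      = push I I' K g i'" if "i' \<in> I'" for i'
  proof -
    note push_i' = push_eq_kappa[OF assms(1) \<kappa> that]
    have "(\<Prod>k\<in>B. (map (push I I' K) Vs ! k) i') = (\<Prod>k\<in>B. K (\<kappa> i') i' * (Vs ! k) (\<kappa> i'))"
      using assms(6) push_i' by (intro prod.cong) auto
    then show ?thesis unfolding push_i' g_def
      using power_int_scale_prod[OF push_kernel_pos[OF assms(1) \<kappa> assms(4,5) that] assms(7)] by simp
  qed
  then have "tau_block I' (push I I' K mu) (map (push I I' K) Vs) B = (\<Sum>i'\<in>I'. push I I' K g i')"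
    unfolding tau_block_def by (intro sum.cong) auto
  also have "\<dots> = tau_block I mu Vs B"
    unfolding sum_push[OF assms(3,2)] tau_block_def g_def ..
  finally show ?thesis .
qed

lemma tau_part_push:
  assumes "finite I" "finite I'" "congruent_kernel I I' K" "mu \<in> Mplus I" "push I I' K mu \<in> Mplus I'"
    "P \<in> partitions (length Vs)"
  shows "tau_part I' (push I I' K mu) (map (push I I' K) Vs) P = tau_part I mu Vs P"
  unfolding tau_part_def using tau_block_push[OF assms(1-5)] partition_blockD[OF assms(6)]
  by (intro prod.cong) auto

lemma sum_tau_part_push:
  assumes "finite I" "finite I'" "congruent_kernel I I' K" "mu \<in> Mplus I" "push I I' K mu \<in> Mplus I'"
    "length Vs = n"
  shows "(\<Sum>P\<in>partitions n. a P * tau_part I' (push I I' K mu) (map (push I I' K) Vs) P) =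
         (\<Sum>P\<in>partitions n. a P * tau_part I mu Vs P)"
  using tau_part_push[OF assms(1-5)] assms(6) by simp

definition bij_kernel :: "(nat \<Rightarrow> nat) \<Rightarrow> nat \<Rightarrow> nat \<Rightarrow> real" where
  "bij_kernel \<sigma> i i' = (if \<sigma> i = i' then 1 else 0)"

lemma
  assumes "bij_betw \<sigma> J J'" "finite J" "finite J'"
  shows congruent_kernel_bij_kernel: "congruent_kernel J J' (bij_kernel \<sigma>)"
    and push_bij_kernel: "i' \<in> J' \<Longrightarrow> push J J' (bij_kernel \<sigma>) x i' = x (inv_into J \<sigma> i')"
proof -
  let ?\<kappa> = "inv_into J \<sigma>"
  have inj: "inj_on \<sigma> J" and im: "\<sigma> ` J = J'" using assms(1) unfolding bij_betw_def by auto
  have \<kappa>: "?\<kappa> ` J' \<subseteq> J" using im by (auto intro: inv_into_into)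
  have zero: "\<forall>i\<in>J. \<forall>i'\<in>J'. ?\<kappa> i' \<noteq> i \<longrightarrow> bij_kernel \<sigma> i i' = 0"
    using inj unfolding bij_kernel_def by auto
  have "(\<Sum>i'\<in>J'. bij_kernel \<sigma> i i') = 1" if "i \<in> J" for i
    using that im assms(3) unfolding bij_kernel_def by (auto simp: sum.delta)
  moreover have "\<forall>i\<in>J. \<forall>i'\<in>J'. 0 \<le> bij_kernel \<sigma> i i'" by (simp add: bij_kernel_def)
  ultimately show "congruent_kernel J J' (bij_kernel \<sigma>)"
    unfolding congruent_kernel_def using \<kappa> zero by blast
  assume "i' \<in> J'"
  moreover have "bij_kernel \<sigma> (?\<kappa> i') i' = 1" if "i' \<in> J'"
    unfolding bij_kernel_def using that im by (simp add: f_inv_into_f)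
  ultimately show "push J J' (bij_kernel \<sigma>) x i' = x (?\<kappa> i')"
    using push_eq_kappa[OF assms(2) \<kappa> zero] by simp
qed

definition dirac :: "nat \<Rightarrow> nat \<Rightarrow> real" where
  "dirac i = (\<lambda>j. if j = i then 1 else 0)"

definition uniform_measure :: "nat set \<Rightarrow> real \<Rightarrow> nat \<Rightarrow> real" where
  "uniform_measure I c = (\<lambda>i. if i \<in> I then c else 0)"

lemma dirac_Sm: "i \<in> I \<Longrightarrow> dirac i \<in> Sm I"
  unfolding dirac_def Sm_def by auto

lemma uniform_measure_Mplus: "c > 0 \<Longrightarrow> uniform_measure I c \<in> Mplus I"
  unfolding uniform_measure_def Mplus_def Sm_def by auto

lemma push_bij_kernel_uniform_measure:
  assumes "bij_betw \<sigma> J J'" "finite J" "finite J'"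
  shows "push J J' (bij_kernel \<sigma>) (uniform_measure J c) = uniform_measure J' c"
proof
  fix i'
  have "inv_into J \<sigma> i' \<in> J" if "i' \<in> J'" using assms(1) that by (metis bij_betw_def inv_into_into)
  then show "push J J' (bij_kernel \<sigma>) (uniform_measure J c) i' = uniform_measure J' c i'"
    using push_bij_kernel[OF assms] by (auto simp: uniform_measure_def push_def)
qed

lemma push_bij_kernel_dirac:
  assumes "bij_betw \<sigma> J J'" "finite J" "finite J'" "i \<in> J"
  shows "push J J' (bij_kernel \<sigma>) (dirac i) = dirac (\<sigma> i)"
proof
  fix i'
  have "inv_into J \<sigma> i' = i \<longleftrightarrow> i' = \<sigma> i" if "i' \<in> J'"
    using that assms(1,4) unfolding bij_betw_def by (metis f_inv_into_f inv_into_f_f)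
  moreover have "\<sigma> i \<in> J'" using assms(1,4) by (auto simp: bij_betw_def)
  ultimately show "push J J' (bij_kernel \<sigma>) (dirac i) i' = dirac (\<sigma> i) i'"
    using push_bij_kernel[OF assms(1-3)] by (cases "i' \<in> J'") (auto simp: dirac_def push_def)
qed

lemma push_bij_kernel_Mplus:
  assumes "bij_betw \<sigma> J J'" "finite J" "finite J'"
  shows "push J J' (bij_kernel \<sigma>) ` Mplus J \<subseteq> Mplus J'"
proof -
  have "inv_into J \<sigma> i' \<in> J" if "i' \<in> J'" for i' using assms(1) that by (metis bij_betw_def inv_into_into)
  then show ?thesis using push_bij_kernel[OF assms] push_Sm unfolding Mplus_def by auto
qed

lemma permutation_extending_inj_on:
  assumes "finite I" "A \<subseteq> I" "inj_on h A" "h ` A \<subseteq> I"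
  obtains \<sigma> where "bij_betw \<sigma> I I" "\<And>x. x \<in> A \<Longrightarrow> \<sigma> x = h x"
proof -
  have "card (I - A) = card (I - h ` A)"
    using assms finite_subset[OF assms(2,1)] by (simp add: card_Diff_subset card_image)
  then obtain \<tau> where \<tau>: "bij_betw \<tau> (I - A) (I - h ` A)"
    using finite_same_card_bij assms(1) by (meson finite_Diff)
  define \<sigma> where "\<sigma> x = (if x \<in> A then h x else \<tau> x)" for x
  have "bij_betw \<sigma> A (h ` A)"
    using assms(3) by (simp add: \<sigma>_def bij_betw_def inj_on_def image_def)
  moreover have "bij_betw \<sigma> (I - A) (I - h ` A)"
    using \<tau> by (rule bij_betw_cong[THEN iffD1, rotated]) (simp add: \<sigma>_def)
  ultimately have "bij_betw \<sigma> (A \<union> (I - A)) (h ` A \<union> (I - h ` A))"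
    by (rule bij_betw_combine) auto
  moreover have "A \<union> (I - A) = I" "h ` A \<union> (I - h ` A) = I" using assms by auto
  ultimately show ?thesis using that by (auto simp: \<sigma>_def)
qed

text \<open>Finite sets are sets of natural numbers, so the pairs \<open>(i, j)\<close> with \<open>j < m i\<close> indexing
  the pieces into which the point \<open>i\<close> is split are encoded as natural numbers.\<close>

definition split_set :: "nat set \<Rightarrow> (nat \<Rightarrow> nat) \<Rightarrow> nat set" where
  "split_set I m = prod_encode ` (SIGMA i:I. {..<m i})"

definition split_kernel :: "(nat \<Rightarrow> nat) \<Rightarrow> nat \<Rightarrow> nat \<Rightarrow> real" where
  "split_kernel m i w = (if fst (prod_decode w) = i then 1 / real (m i) else 0)"

lemma split_set_fst: "w \<in> split_set I m \<Longrightarrow> fst (prod_decode w) \<in> I"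
  unfolding split_set_def by auto

lemma finite_split_set: "finite I \<Longrightarrow> finite (split_set I m)"
  unfolding split_set_def by auto

lemma card_split_set: "finite I \<Longrightarrow> card (split_set I m) = (\<Sum>i\<in>I. m i)"
  unfolding split_set_def by (simp add: card_image inj_prod_encode card_SigmaI)

lemma split_set_nonempty: "I \<noteq> {} \<Longrightarrow> \<forall>i\<in>I. m i \<ge> 1 \<Longrightarrow> split_set I m \<noteq> {}"
  unfolding split_set_def by (auto simp: Suc_le_eq)

lemma congruent_kernel_split_kernel:
  assumes "finite I" "\<forall>i\<in>I. m i \<ge> 1"
  shows "congruent_kernel I (split_set I m) (split_kernel m)"
proof -
  have "(\<Sum>w\<in>split_set I m. split_kernel m i w) = 1" if i: "i \<in> I" for i
  proof -
    have "(\<Sum>w\<in>split_set I m. split_kernel m i w) = (\<Sum>p\<in>(SIGMA i:I. {..<m i}). split_kernel m i (prod_encode p))"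
      unfolding split_set_def by (rule sum.reindex[OF inj_prod_encode, unfolded comp_def])
    also have "\<dots> = (\<Sum>i'\<in>I. \<Sum>j<m i'. if i' = i then 1 / real (m i) else 0)"
      unfolding split_kernel_def using assms(1) by (subst sum.Sigma) (auto simp: split_beta)
    also have "\<dots> = (\<Sum>j<m i. 1 / real (m i))" using assms(1) i by (simp add: sum.delta' if_distrib cong: if_cong)
    also have "\<dots> = 1" using assms(2) i by (simp add: Suc_le_eq)
    finally show ?thesis .
  qed
  moreover have "(\<lambda>w. fst (prod_decode w)) ` split_set I m \<subseteq> I" using split_set_fst by blast
  ultimately show ?thesis unfolding congruent_kernel_def by (auto simp: split_kernel_def)
qed

lemma push_split_kernel:
  assumes "finite I" "w \<in> split_set I m"
  shows "push I (split_set I m) (split_kernel m) x w = x (fst (prod_decode w)) / real (m (fst (prod_decode w)))"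
proof -
  have "\<forall>i\<in>I. \<forall>w\<in>split_set I m. fst (prod_decode w) \<noteq> i \<longrightarrow> split_kernel m i w = 0"
    by (simp add: split_kernel_def)
  moreover have "(\<lambda>w. fst (prod_decode w)) ` split_set I m \<subseteq> I" using split_set_fst by blast
  ultimately show ?thesis using push_eq_kappa[OF assms(1) _ _ assms(2)] by (simp add: split_kernel_def)
qed

lemma push_split_kernel_Mplus:
  assumes "finite I" "\<forall>i\<in>I. m i \<ge> 1"
  shows "push I (split_set I m) (split_kernel m) ` Mplus I \<subseteq> Mplus (split_set I m)"
  using assms push_split_kernel[OF assms(1)] split_set_fst push_Sm
  unfolding Mplus_def by (force simp: Suc_le_eq)

lemma push_split_kernel_uniform_measure:
  assumes "finite I" "\<And>i. i \<in> I \<Longrightarrow> mu i = c * real (m i)" "\<forall>i\<in>I. m i \<ge> 1"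
  shows "push I (split_set I m) (split_kernel m) mu = uniform_measure (split_set I m) c"
proof
  fix w
  show "push I (split_set I m) (split_kernel m) mu w = uniform_measure (split_set I m) c w"
    using assms push_split_kernel[OF assms(1)] split_set_fst
    by (cases "w \<in> split_set I m") (auto simp: uniform_measure_def push_def Suc_le_eq)
qed

section \<open>Unitriangular systems over a finite partial order\<close>

lemma card_down_set_less:
  assumes "finite S" "reflp_on S R" "antisymp_on S R" "transp_on S R"
    and "P \<in> S" "Q \<in> S" "R P Q" "P \<noteq> Q"
  shows "card {P'\<in>S. R P' P} < card {P'\<in>S. R P' Q}"
proof (rule psubset_card_mono)
  show "finite {P'\<in>S. R P' Q}" using assms(1) by simp
  have "Q \<notin> {P'\<in>S. R P' P}" using assms(3,5-8) unfolding antisymp_on_def by blast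
  moreover have "Q \<in> {P'\<in>S. R P' Q}" using assms(2,6) unfolding reflp_on_def by blast
  moreover have "{P'\<in>S. R P' P} \<subseteq> {P'\<in>S. R P' Q}" using assms(4-7) unfolding transp_on_def by blast
  ultimately show "{P'\<in>S. R P' P} \<subset> {P'\<in>S. R P' Q}" by blast
qed

lemma unitriangular_solvable:
  fixes t :: "'a \<Rightarrow> 'b::ab_group_add"
  assumes fin: "finite S" and order: "reflp_on S R" "antisymp_on S R" "transp_on S R"
  shows "\<exists>b. \<forall>Q\<in>S. (\<Sum>P\<in>{P\<in>S. R P Q}. b P) = t Q"
proof -
  define r where "r Q = card {P\<in>S. R P Q}" for Q
  have refl: "R Q Q" if "Q \<in> S" for Q using order(1) that unfolding reflp_on_def by blast
  have below: "r P < r Q" if "P \<in> {P\<in>S. R P Q} - {Q}" "Q \<in> S" for P Q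
    unfolding r_def using card_down_set_less[OF fin order] that by blast
  have "\<exists>b. \<forall>Q\<in>S. r Q < k \<longrightarrow> (\<Sum>P\<in>{P\<in>S. R P Q}. b P) = t Q" for k
  proof (induction k)
    case (Suc k)
    then obtain b where b: "\<forall>Q\<in>S. r Q < k \<longrightarrow> (\<Sum>P\<in>{P\<in>S. R P Q}. b P) = t Q" by blast
    define b' where "b' P = (if r P = k then t P - (\<Sum>P'\<in>{P'\<in>S. R P' P} - {P}. b P') else b P)" for P
    have "(\<Sum>P\<in>{P\<in>S. R P Q}. b' P) = t Q" if Q: "Q \<in> S" "r Q < Suc k" for Q
    proof -
      have "b' P = b P" if "P \<in> {P\<in>S. R P Q} - {Q}" for P
        using below[OF that Q(1)] Q(2) unfolding b'_def by auto
      then have "(\<Sum>P\<in>{P\<in>S. R P Q}. b' P) = b' Q + (\<Sum>P\<in>{P\<in>S. R P Q} - {Q}. b P)"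
        using fin Q(1) refl[OF Q(1)] by (simp add: sum.remove)
      then show ?thesis
        using b Q refl[OF Q(1)] fin by (cases "r Q = k") (auto simp: b'_def sum.remove)
    qed
    then show ?case by blast
  qed simp
  moreover obtain k where "\<forall>Q\<in>S. r Q < k"
    using finite_nat_bounded[OF finite_imageI[OF fin, of r]] by auto
  ultimately show ?thesis by metis
qed

lemma unitriangular_injective:
  fixes b :: "'a \<Rightarrow> 'b::comm_monoid_add"
  assumes fin: "finite S" and order: "reflp_on S R" "antisymp_on S R" "transp_on S R"
    and zero: "\<And>Q. Q \<in> S \<Longrightarrow> (\<Sum>P\<in>{P\<in>S. R P Q}. b P) = 0"
    and "P \<in> S"
  shows "b P = 0"
proof -
  define r where "r Q = card {P\<in>S. R P Q}" for Q
  have "\<forall>Q\<in>S. r Q < k \<longrightarrow> b Q = 0" for k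
  proof (induction k)
    case (Suc k)
    show ?case
    proof (intro ballI impI)
      fix Q assume Q: "Q \<in> S" "r Q < Suc k"
      have "(\<Sum>P\<in>{P\<in>S. R P Q} - {Q}. b P) = 0"
        using Suc.IH Q card_down_set_less[OF fin order] unfolding r_def
        by (intro sum.neutral) (fastforce simp: less_Suc_eq_le)
      moreover have "Q \<in> {P\<in>S. R P Q}" using order(1) Q(1) unfolding reflp_on_def by blast
      ultimately show "b Q = 0" using zero[OF Q(1)] fin by (simp add: sum.remove)
    qed
  qed simp
  then show ?thesis using \<open>P \<in> S\<close> by blast
qed

lemma refines_partial_order:
  shows "reflp_on (partitions n) (refines {0..<n})"
    and "antisymp_on (partitions n) (refines {0..<n})"
    and "transp_on (partitions n) (refines {0..<n})"
  unfolding partitions_def reflp_on_def antisymp_on_def transp_on_def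
  by (simp_all add: refines_refl refines_asym) (blast intro: refines_trans)

definition dirac_list :: "nat \<Rightarrow> (nat \<Rightarrow> nat) \<Rightarrow> (nat \<Rightarrow> real) list" where
  "dirac_list n f = map (\<lambda>k. dirac (f k)) [0..<n]"

definition fibre_partition :: "nat \<Rightarrow> (nat \<Rightarrow> nat) \<Rightarrow> nat set set" where
  "fibre_partition n f = (\<lambda>k. {j\<in>{0..<n}. f j = f k}) ` {0..<n}"

definition uniform_weight :: "real \<Rightarrow> nat set set \<Rightarrow> real" where
  "uniform_weight c P = (\<Prod>B\<in>P. c powi (1 - int (card B)))"

lemma length_dirac_list [simp]: "length (dirac_list n f) = n"
  unfolding dirac_list_def by simp

lemma nth_dirac_list [simp]: "k < n \<Longrightarrow> dirac_list n f ! k = dirac (f k)"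
  unfolding dirac_list_def by simp

lemma dirac_list_Sm: "(\<And>k. k < n \<Longrightarrow> f k \<in> I) \<Longrightarrow> set (dirac_list n f) \<subseteq> Sm I"
  unfolding dirac_list_def using dirac_Sm by auto

lemma multilinear_on_Sm_expand:
  assumes "multilinear_on (Sm I) n F" "finite I" "length Vs = n" "set Vs \<subseteq> Sm I"
  shows "F Vs = (\<Sum>g\<in>PiE {0..<n} (\<lambda>_. I). (\<Prod>k<n. (Vs ! k) (g k)) * F (dirac_list n g))"
  unfolding dirac_list_def
proof (rule multilinear_on_expand[OF assms(1) lincomb_closed_Sm assms(3,4,2) dirac_Sm])
  have "V = (\<lambda>i. \<Sum>j\<in>I. V j * dirac j i)" if "V \<in> Sm I" for V
    using that assms(2) unfolding dirac_def Sm_def by (auto simp: if_distrib cong: if_cong)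
  then show "\<And>k. k < n \<Longrightarrow> Vs ! k = (\<lambda>i. \<Sum>j\<in>I. (Vs ! k) j * dirac j i)"
    using assms(3,4) by (metis nth_mem subsetD)
qed

lemma multilinear_on_Sm_eqI:
  assumes "multilinear_on (Sm I) n F" "multilinear_on (Sm I) n G" "finite I"
    and "\<And>f. (\<And>k. k < n \<Longrightarrow> f k \<in> I) \<Longrightarrow> F (dirac_list n f) = G (dirac_list n f)"
    and "length Vs = n" "set Vs \<subseteq> Sm I"
  shows "F Vs = G Vs"
  unfolding multilinear_on_Sm_expand[OF assms(1,3,5,6)] multilinear_on_Sm_expand[OF assms(2,3,5,6)]
  using assms(4) by (intro sum.cong refl) (auto simp: PiE_iff)

lemma fibre_partition_partitions: "fibre_partition n f \<in> partitions n"
  unfolding partitions_def mem_Collect_eq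
proof (rule partition_onI)
  show "\<Union>(fibre_partition n f) = {0..<n}" "{} \<notin> fibre_partition n f"
    unfolding fibre_partition_def by auto
  show "disjnt p q" if "p \<in> fibre_partition n f" "q \<in> fibre_partition n f" "p \<noteq> q" for p q
    using that unfolding fibre_partition_def disjnt_def by auto
qed

lemma refines_fibre_partition_iff:
  assumes P: "P \<in> partitions n"
  shows "refines {0..<n} P (fibre_partition n f) \<longleftrightarrow> (\<forall>B\<in>P. f constant_on B)"
proof
  assume "refines {0..<n} P (fibre_partition n f)"
  then have "\<exists>l. B \<subseteq> {j\<in>{0..<n}. f j = f l}" if "B \<in> P" for B
    using that unfolding refines_def fibre_partition_def by blast
  then show "\<forall>B\<in>P. f constant_on B"
    unfolding constant_on_def by blast
next
  assume const: "\<forall>B\<in>P. f constant_on B"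
  have "\<exists>Y\<in>fibre_partition n f. B \<subseteq> Y" if B: "B \<in> P" for B
  proof -
    obtain k where k: "k \<in> B" using partition_blockD[OF P B] by blast
    obtain y where "\<forall>x\<in>B. f x = y" using const B unfolding constant_on_def by blast
    moreover have "B \<subseteq> {0..<n}" using partition_blockD[OF P B] by blast
    ultimately have "B \<subseteq> {j\<in>{0..<n}. f j = f k}" "k \<in> {0..<n}" using k by auto
    then show ?thesis unfolding fibre_partition_def by blast
  qed
  then show "refines {0..<n} P (fibre_partition n f)"
    using P fibre_partition_partitions[of n f] unfolding refines_def partitions_def by auto
qed

lemma fibre_partition_eqD:
  assumes "fibre_partition n f = fibre_partition n g" "k < n" "j < n" "f k = f j"
  shows "g k = g j"
proof -
  have "{x\<in>{0..<n}. f x = f k} \<in> fibre_partition n f"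
    using assms(2) unfolding fibre_partition_def by auto
  then have "{x\<in>{0..<n}. f x = f k} \<in> fibre_partition n g"
    unfolding assms(1) .
  then obtain l where l: "{x\<in>{0..<n}. f x = f k} = {x\<in>{0..<n}. g x = g l}"
    unfolding fibre_partition_def by auto
  have "k \<in> {x\<in>{0..<n}. g x = g l}" "j \<in> {x\<in>{0..<n}. g x = g l}"
    unfolding l[symmetric] using assms(2-4) by auto
  then show ?thesis by simp
qed

lemma fibre_partition_surj:
  assumes Q: "Q \<in> partitions n" and I: "finite I" "n \<le> card I"
  obtains f where "\<And>k. k < n \<Longrightarrow> f k \<in> I" "fibre_partition n f = Q"
proof -
  obtain \<iota> where \<iota>: "\<iota> ` Q \<subseteq> I" "inj_on \<iota> Q"
    using card_le_inj[OF finite_partition_blocks[OF Q] I(1)] card_partition_le[OF Q] I(2) by fastforce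
  define blk where "blk k = (THE B. B \<in> Q \<and> k \<in> B)" for k
  have blk: "blk k \<in> Q \<and> k \<in> blk k" if "k < n" for k
    unfolding blk_def using theI'[OF partition_block_ex1[OF Q that]] .
  have blk_eq: "blk k = B" if B: "B \<in> Q" "k \<in> B" for k B
  proof -
    have "k < n" using partition_blockD[OF Q B(1)] B(2) by auto
    then show ?thesis
      unfolding blk_def by (rule the1_equality[OF partition_block_ex1[OF Q]]) (use B in simp)
  qed
  have fibre: "{j\<in>{0..<n}. \<iota> (blk j) = \<iota> (blk k)} = blk k" if k: "k < n" for k
  proof (intro equalityI subsetI)
    fix j assume "j \<in> {j\<in>{0..<n}. \<iota> (blk j) = \<iota> (blk k)}"
    then have j: "j < n" "\<iota> (blk j) = \<iota> (blk k)" by auto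
    then have "blk j = blk k" using inj_onD[OF \<iota>(2)] blk[OF j(1)] blk[OF k] by blast
    then show "j \<in> blk k" using blk[OF j(1)] by simp
  next
    fix j assume j: "j \<in> blk k"
    have "j < n" using partition_blockD[OF Q] blk[OF k] j by fastforce
    moreover have "blk j = blk k" using blk_eq blk[OF k] j by blast
    ultimately show "j \<in> {j\<in>{0..<n}. \<iota> (blk j) = \<iota> (blk k)}" by simp
  qed
  have "fibre_partition n (\<iota> \<circ> blk) = blk ` {0..<n}"
    unfolding fibre_partition_def using fibre by (intro image_cong) auto
  also have "\<dots> = Q"
  proof (intro equalityI subsetI)
    fix B assume B: "B \<in> Q"
    then obtain k where k: "k \<in> B" using partition_blockD[OF Q] by blast
    then have "k < n" using partition_blockD[OF Q B] by auto
    then show "B \<in> blk ` {0..<n}" using blk_eq[OF B k] by force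
  qed (use blk in auto)
  finally show ?thesis using that[of "\<iota> \<circ> blk"] blk \<iota>(1) by auto
qed

lemma prod_if_one_zero: "finite A \<Longrightarrow> (\<Prod>x\<in>A. if Q x then 1 else 0::real) = (if \<forall>x\<in>A. Q x then 1 else 0)"
  by (induction rule: finite_induct) auto

lemma uniform_weight_nonzero: "c > 0 \<Longrightarrow> uniform_weight c P \<noteq> 0"
  unfolding uniform_weight_def by (cases "finite P") (auto simp: prod_zero_iff)

lemma tau_part_uniform_dirac_list:
  assumes "finite I" "P \<in> partitions n" "\<And>k. k < n \<Longrightarrow> f k \<in> I"
  shows "tau_part I (uniform_measure I c) (dirac_list n f) P =
    (if refines {0..<n} P (fibre_partition n f) then uniform_weight c P else 0)"
proof -
  have block: "tau_block I (uniform_measure I c) (dirac_list n f) B =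
      c powi (1 - int (card B)) * (if f constant_on B then 1 else 0)" if B: "B \<in> P" for B
  proof -
    obtain k0 where k0: "k0 \<in> B" using partition_blockD[OF assms(2) B] by blast
    have "(\<forall>k\<in>B. f k = i) \<longleftrightarrow> i = f k0 \<and> f constant_on B" for i
      using k0 unfolding constant_on_def by metis
    moreover have "(\<Prod>k\<in>B. (dirac_list n f ! k) i) = (\<Prod>k\<in>B. if f k = i then 1 else 0)" for i
      using partition_blockD[OF assms(2) B] by (intro prod.cong) (auto simp: dirac_def)
    ultimately have prod: "(\<Prod>k\<in>B. (dirac_list n f ! k) i) = (if i = f k0 \<and> f constant_on B then 1 else 0)" for i
      using partition_blockD[OF assms(2) B] by (simp add: prod_if_one_zero)
    have "tau_block I (uniform_measure I c) (dirac_list n f) B =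
        (\<Sum>i\<in>I. if i = f k0 then c powi (1 - int (card B)) * (if f constant_on B then 1 else 0) else 0)"
      unfolding tau_block_def prod by (intro sum.cong refl) (auto simp: uniform_measure_def)
    also have "\<dots> = c powi (1 - int (card B)) * (if f constant_on B then 1 else 0)"
      using assms(1) assms(3)[of k0] partition_blockD[OF assms(2) B] k0 by (simp add: sum.delta' subset_iff)
    finally show ?thesis .
  qed
  have "tau_part I (uniform_measure I c) (dirac_list n f) P =
      uniform_weight c P * (\<Prod>B\<in>P. if f constant_on B then 1 else 0)"
    unfolding tau_part_def uniform_weight_def by (simp add: block prod.distrib)
  then show ?thesis using refines_fibre_partition_iff[OF assms(2)] finite_partition_blocks[OF assms(2)]
    by (simp add: prod_if_one_zero)
qed

lemma sum_tau_part_uniform_dirac_list: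
  assumes "finite I" "\<And>k. k < n \<Longrightarrow> f k \<in> I"
  shows "(\<Sum>P\<in>partitions n. a P * tau_part I (uniform_measure I c) (dirac_list n f) P) =
    (\<Sum>P\<in>{P\<in>partitions n. refines {0..<n} P (fibre_partition n f)}. a P * uniform_weight c P)"
proof -
  have "(\<Sum>P\<in>partitions n. a P * tau_part I (uniform_measure I c) (dirac_list n f) P) =
      (\<Sum>P\<in>partitions n. if refines {0..<n} P (fibre_partition n f) then a P * uniform_weight c P else 0)"
    using tau_part_uniform_dirac_list[where f=f and n=n, OF assms(1) _ assms(2)] by (intro sum.cong) auto
  then show ?thesis by (simp add: sum.inter_filter[OF finite_partitions])
qed

definition has_tau_expansion ::
  "nat \<Rightarrow> (nat set \<Rightarrow> (nat \<Rightarrow> real) \<Rightarrow> (nat \<Rightarrow> real) list \<Rightarrow> real) \<Rightarrow> nat set \<Rightarrow> (nat \<Rightarrow> real)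
     \<Rightarrow> (nat set set \<Rightarrow> real) \<Rightarrow> bool" where
  "has_tau_expansion n Th I mu a \<longleftrightarrow>
     (\<forall>Vs. length Vs = n \<and> set Vs \<subseteq> Sm I \<longrightarrow> Th I mu Vs = (\<Sum>P\<in>partitions n. a P * tau_part I mu Vs P))"

lemma has_tau_expansion_cong:
  "(\<And>P. P \<in> partitions n \<Longrightarrow> a P = b P) \<Longrightarrow> has_tau_expansion n Th I mu a \<longleftrightarrow> has_tau_expansion n Th I mu b"
  unfolding has_tau_expansion_def by simp

lemma congruent_family_MD:
  assumes "congruent_family_M n Th" "finite I" "I \<noteq> {}" "finite I'" "I' \<noteq> {}" "congruent_kernel I I' K"
    "push I I' K ` Mplus I \<subseteq> Mplus I'" "mu \<in> Mplus I" "length Vs = n" "set Vs \<subseteq> Sm I"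
  shows "Th I' (push I I' K mu) (map (push I I' K) Vs) = Th I mu Vs"
  using assms unfolding congruent_family_M_def by blast

lemma has_tau_expansion_pullback:
  assumes cong: "congruent_family_M n Th" and I: "finite I" "I \<noteq> {}" "finite I'" "I' \<noteq> {}"
    and K: "congruent_kernel I I' K" "push I I' K ` Mplus I \<subseteq> Mplus I'" and mu: "mu \<in> Mplus I"
    and a: "has_tau_expansion n Th I' (push I I' K mu) a"
  shows "has_tau_expansion n Th I mu a"
  unfolding has_tau_expansion_def
proof (intro allI impI)
  fix Vs assume Vs: "length Vs = n \<and> set Vs \<subseteq> Sm I"
  have "Th I mu Vs = Th I' (push I I' K mu) (map (push I I' K) Vs)"
    using congruent_family_MD[OF cong I K mu] Vs by simp
  also have "\<dots> = (\<Sum>P\<in>partitions n. a P * tau_part I' (push I I' K mu) (map (push I I' K) Vs) P)"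
    using a Vs push_Sm[of I I' K] unfolding has_tau_expansion_def by (simp add: image_subset_iff)
  also have "\<dots> = (\<Sum>P\<in>partitions n. a P * tau_part I mu Vs P)"
    using sum_tau_part_push[OF I(1,3) K(1) mu] K(2) mu Vs by blast
  finally show "Th I mu Vs = (\<Sum>P\<in>partitions n. a P * tau_part I mu Vs P)" .
qed

lemma congruent_uniform_dirac_list_eq:
  assumes cong: "congruent_family_M n Th" and I: "finite I" "I \<noteq> {}" and c: "c > 0"
    and fg: "\<And>k. k < n \<Longrightarrow> f k \<in> I \<and> g k \<in> I"
    and eq: "\<And>k j. k < n \<Longrightarrow> j < n \<Longrightarrow> f k = f j \<longleftrightarrow> g k = g j"
  shows "Th I (uniform_measure I c) (dirac_list n f) = Th I (uniform_measure I c) (dirac_list n g)"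
proof -
  define h where "h x = g (SOME k. k < n \<and> f k = x)" for x
  have hf: "h (f k) = g k" if "k < n" for k
  proof -
    have "(SOME k'. k' < n \<and> f k' = f k) < n \<and> f (SOME k'. k' < n \<and> f k' = f k) = f k"
      by (rule someI_ex) (use that in blast)
    then show ?thesis unfolding h_def using eq that by blast
  qed
  have "inj_on h (f ` {0..<n})" by (rule inj_onI) (use hf eq in auto)
  moreover have "f ` {0..<n} \<subseteq> I" "h ` f ` {0..<n} \<subseteq> I" using fg hf by auto
  ultimately obtain \<sigma> where \<sigma>: "bij_betw \<sigma> I I" "\<And>x. x \<in> f ` {0..<n} \<Longrightarrow> \<sigma> x = h x"
    using permutation_extending_inj_on[OF I(1)] by metis
  have "map (push I I (bij_kernel \<sigma>)) (dirac_list n f) = dirac_list n g"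
    using push_bij_kernel_dirac[OF \<sigma>(1) I(1) I(1)] fg \<sigma>(2) hf by (intro nth_equalityI) auto
  then show ?thesis
    using congruent_family_MD[OF cong I I congruent_kernel_bij_kernel[OF \<sigma>(1) I(1) I(1)]
        push_bij_kernel_Mplus[OF \<sigma>(1) I(1) I(1)] uniform_measure_Mplus[OF c], of "dirac_list n f"]
      push_bij_kernel_uniform_measure[OF \<sigma>(1) I(1) I(1)] dirac_list_Sm[of n f I] fg by simp
qed

lemma tau_expansion_uniform_dirac_list:
  assumes cong: "congruent_family_M n Th" and I: "finite I" "I \<noteq> {}" and c: "c > 0"
  obtains a where "\<And>f. (\<And>k. k < n \<Longrightarrow> f k \<in> I) \<Longrightarrow> Th I (uniform_measure I c) (dirac_list n f) =
      (\<Sum>P\<in>partitions n. a P * tau_part I (uniform_measure I c) (dirac_list n f) P)"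
proof -
  let ?S = "partitions n" and ?u = "uniform_measure I c"
  define rep where "rep Q = (SOME f. (\<forall>k<n. f k \<in> I) \<and> fibre_partition n f = Q)" for Q
  obtain b where b: "\<forall>Q\<in>?S. (\<Sum>P\<in>{P\<in>?S. refines {0..<n} P Q}. b P) = Th I ?u (dirac_list n (rep Q))"
    using unitriangular_solvable[OF finite_partitions refines_partial_order[of n],
        where t="\<lambda>Q. Th I ?u (dirac_list n (rep Q))"] by blast
  have "Th I ?u (dirac_list n f) = (\<Sum>P\<in>?S. b P / uniform_weight c P * tau_part I ?u (dirac_list n f) P)"
    if f: "\<And>k. k < n \<Longrightarrow> f k \<in> I" for f
  proof -
    let ?Q = "fibre_partition n f"
    have rep: "(\<forall>k<n. rep ?Q k \<in> I) \<and> fibre_partition n (rep ?Q) = ?Q"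
      unfolding rep_def by (rule someI[of _ f]) (use f in simp)
    have "Th I ?u (dirac_list n f) = Th I ?u (dirac_list n (rep ?Q))"
    proof (rule congruent_uniform_dirac_list_eq[OF cong I c])
      show "f k \<in> I \<and> rep ?Q k \<in> I" if "k < n" for k using f rep that by blast
      show "f k = f j \<longleftrightarrow> rep ?Q k = rep ?Q j" if "k < n" "j < n" for k j
        using fibre_partition_eqD[OF rep[THEN conjunct2, symmetric] that]
          fibre_partition_eqD[OF rep[THEN conjunct2] that] by blast
    qed
    also have "\<dots> = (\<Sum>P\<in>{P\<in>?S. refines {0..<n} P ?Q}. b P)"
      using bspec[OF b fibre_partition_partitions[of n f]] by simp
    also have "\<dots> = (\<Sum>P\<in>{P\<in>?S. refines {0..<n} P ?Q}. b P / uniform_weight c P * uniform_weight c P)"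
      using uniform_weight_nonzero[OF c] by simp
    also have "\<dots> = (\<Sum>P\<in>?S. b P / uniform_weight c P * tau_part I ?u (dirac_list n f) P)"
      by (rule sum_tau_part_uniform_dirac_list[OF I(1) f, symmetric])
    finally show ?thesis .
  qed
  then show ?thesis by (rule that)
qed

lemma has_tau_expansion_uniform:
  assumes cong: "congruent_family_M n Th" and fld: "tensor_field (Mplus I) (Sm I) n (Th I)"
    and I: "finite I" "I \<noteq> {}" and c: "c > 0"
  obtains a where "has_tau_expansion n Th I (uniform_measure I c) a"
proof -
  obtain a where a: "\<And>f. (\<And>k. k < n \<Longrightarrow> f k \<in> I) \<Longrightarrow> Th I (uniform_measure I c) (dirac_list n f) =
      (\<Sum>P\<in>partitions n. a P * tau_part I (uniform_measure I c) (dirac_list n f) P)"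
    using tau_expansion_uniform_dirac_list[OF cong I c] by blast
  have "has_tau_expansion n Th I (uniform_measure I c) a"
    unfolding has_tau_expansion_def
  proof (intro allI impI)
    fix Vs assume Vs: "length Vs = n \<and> set Vs \<subseteq> Sm I"
    show "Th I (uniform_measure I c) Vs = (\<Sum>P\<in>partitions n. a P * tau_part I (uniform_measure I c) Vs P)"
    proof (rule multilinear_on_Sm_eqI[where G="\<lambda>Vs. \<Sum>P\<in>partitions n. a P * tau_part I (uniform_measure I c) Vs P"])
      show "multilinear_on (Sm I) n (Th I (uniform_measure I c))"
        by (rule tensor_field_multilinear_on[OF fld uniform_measure_Mplus[OF c]])
      show "multilinear_on (Sm I) n (\<lambda>Vs. \<Sum>P\<in>partitions n. a P * tau_part I (uniform_measure I c) Vs P)"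
        by (rule multilinear_on_lincomb[OF finite_partitions tau_part_multilinear_on])
    qed (use I(1) a Vs in auto)
  qed
  then show ?thesis by (rule that)
qed

lemma has_tau_expansion_uniform_unique:
  assumes I: "finite I" "n \<le> card I" and c: "c > 0"
    and a: "has_tau_expansion n Th I (uniform_measure I c) a"
    and b: "has_tau_expansion n Th I (uniform_measure I c) b"
    and P: "P \<in> partitions n"
  shows "a P = b P"
proof -
  let ?S = "partitions n"
  have "(\<Sum>P\<in>{P\<in>?S. refines {0..<n} P Q}. (a P - b P) * uniform_weight c P) = 0" if Q: "Q \<in> ?S" for Q
  proof -
    obtain f where f: "\<And>k. k < n \<Longrightarrow> f k \<in> I" "fibre_partition n f = Q"
      using fibre_partition_surj[OF Q I] by blast
    have Vs: "length (dirac_list n f) = n" "set (dirac_list n f) \<subseteq> Sm I"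
      using dirac_list_Sm[of n f I] f(1) by auto
    have "(\<Sum>P\<in>?S. a P * tau_part I (uniform_measure I c) (dirac_list n f) P) =
        Th I (uniform_measure I c) (dirac_list n f)"
      using a Vs unfolding has_tau_expansion_def by simp
    also have "\<dots> = (\<Sum>P\<in>?S. b P * tau_part I (uniform_measure I c) (dirac_list n f) P)"
      using b Vs unfolding has_tau_expansion_def by simp
    finally show ?thesis
      by (simp add: sum_tau_part_uniform_dirac_list[OF I(1) f(1)] f(2) left_diff_distrib sum_subtractf)
  qed
  then have "(a P - b P) * uniform_weight c P = 0"
    by (rule unitriangular_injective[OF finite_partitions refines_partial_order[of n] _ P,
        where b="\<lambda>P. (a P - b P) * uniform_weight c P"])
  then show ?thesis using uniform_weight_nonzero[OF c] by simp
qed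

lemma has_tau_expansion_uniform_card:
  assumes cong: "congruent_family_M n Th" and W: "finite W" "W \<noteq> {}" "finite W'" "W' \<noteq> {}"
    and card: "card W' = card W" and c: "c > 0"
    and a: "has_tau_expansion n Th W (uniform_measure W c) a"
  shows "has_tau_expansion n Th W' (uniform_measure W' c) a"
proof -
  obtain \<sigma> where \<sigma>: "bij_betw \<sigma> W' W" using finite_same_card_bij[OF W(3,1) card] by blast
  have "has_tau_expansion n Th W (push W' W (bij_kernel \<sigma>) (uniform_measure W' c)) a"
    unfolding push_bij_kernel_uniform_measure[OF \<sigma> W(3,1)] by (rule a)
  then show ?thesis
    by (rule has_tau_expansion_pullback[OF cong W(3,4,1,2) congruent_kernel_bij_kernel[OF \<sigma> W(3,1)]
        push_bij_kernel_Mplus[OF \<sigma> W(3,1)] uniform_measure_Mplus[OF c]])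
qed

section \<open>Congruent families on positive measures\<close>

text \<open>On \<open>n + 1\<close> points every partition of \<open>{0..<n}\<close> is a fibre partition, so the coefficients read off
  at the uniform measure of total mass \<open>m\<close> there are unique.\<close>

definition canonical_coeffs ::
  "nat \<Rightarrow> (nat set \<Rightarrow> (nat \<Rightarrow> real) \<Rightarrow> (nat \<Rightarrow> real) list \<Rightarrow> real) \<Rightarrow> real \<Rightarrow> nat set set \<Rightarrow> real" where
  "canonical_coeffs n Th m =
     (SOME a. has_tau_expansion n Th {0..<Suc n} (uniform_measure {0..<Suc n} (m / real (Suc n))) a)"

lemma has_tau_expansion_canonical_coeffs:
  assumes cong: "congruent_family_M n Th"
    and fld: "\<And>I. finite I \<Longrightarrow> I \<noteq> {} \<Longrightarrow> tensor_field (Mplus I) (Sm I) n (Th I)" and m: "m > 0"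
  shows "has_tau_expansion n Th {0..<Suc n} (uniform_measure {0..<Suc n} (m / real (Suc n))) (canonical_coeffs n Th m)"
proof -
  have R: "finite {0..<Suc n}" "{0..<Suc n} \<noteq> {}" and "m / real (Suc n) > 0" using m by auto
  then obtain a where "has_tau_expansion n Th {0..<Suc n} (uniform_measure {0..<Suc n} (m / real (Suc n))) a"
    using has_tau_expansion_uniform[OF cong fld[OF R] R] by blast
  then show ?thesis unfolding canonical_coeffs_def
    by (rule someI[of "has_tau_expansion n Th {0..<Suc n} (uniform_measure {0..<Suc n} (m / real (Suc n)))"])
qed

definition rational_measure :: "nat set \<Rightarrow> real \<Rightarrow> (nat \<Rightarrow> nat) \<Rightarrow> nat \<Rightarrow> real" where
  "rational_measure I m k = (\<lambda>i. if i \<in> I then m * real (k i) / real (\<Sum>i\<in>I. k i) else 0)"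

lemma one_le_sum_nat: "finite I \<Longrightarrow> I \<noteq> {} \<Longrightarrow> \<forall>i\<in>I. k i \<ge> 1 \<Longrightarrow> (\<Sum>i\<in>I. k i) \<ge> (1::nat)"
  by (metis all_not_in_conv member_le_sum order_trans zero_le)

lemma rational_measure_Mplus:
  assumes "finite I" "I \<noteq> {}" "\<forall>i\<in>I. k i \<ge> 1" "m > 0"
  shows "rational_measure I m k \<in> Mplus I"
proof -
  have "real (\<Sum>i\<in>I. k i) > 0" using one_le_sum_nat[OF assms(1-3)] by (simp del: of_nat_sum)
  then show ?thesis using assms(3,4) unfolding rational_measure_def Mplus_def Sm_def
    by (auto simp: Suc_le_eq simp del: of_nat_sum)
qed

lemma has_tau_expansion_split:
  assumes cong: "congruent_family_M n Th" and I: "finite I" "I \<noteq> {}" and mu: "mu \<in> Mplus I"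
    and k: "\<forall>i\<in>I. k i \<ge> 1" "\<And>i. i \<in> I \<Longrightarrow> mu i = c * real (k i)" and c: "c > 0"
    and W: "finite W" "W \<noteq> {}" "card W = (\<Sum>i\<in>I. k i)"
    and b: "has_tau_expansion n Th W (uniform_measure W c) b"
  shows "has_tau_expansion n Th I mu b"
proof -
  let ?W = "split_set I k"
  have W': "finite ?W" "?W \<noteq> {}" using finite_split_set split_set_nonempty I k(1) by auto
  have "has_tau_expansion n Th ?W (uniform_measure ?W c) b"
    using has_tau_expansion_uniform_card[OF cong W(1,2) W' _ c b] card_split_set[OF I(1)] W(3) by simp
  then have "has_tau_expansion n Th ?W (push I ?W (split_kernel k) mu) b"
    using push_split_kernel_uniform_measure[OF I(1) k(2,1)] by simp
  then show ?thesis
    by (rule has_tau_expansion_pullback[OF cong I W' congruent_kernel_split_kernel[OF I(1) k(1)]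
          push_split_kernel_Mplus[OF I(1) k(1)] mu])
qed

text \<open>With \<open>N = \<Sum>k\<^sub>i\<close>, both the measure with weights \<open>m k\<^sub>i / N\<close> and the uniform measure of mass \<open>m\<close>
  on \<open>n + 1\<close> points split into \<open>N (n + 1)\<close> atoms of mass \<open>m / (N (n + 1))\<close>.\<close>

lemma has_tau_expansion_rational:
  assumes cong: "congruent_family_M n Th"
    and fld: "\<And>I. finite I \<Longrightarrow> I \<noteq> {} \<Longrightarrow> tensor_field (Mplus I) (Sm I) n (Th I)"
    and I: "finite I" "I \<noteq> {}" and k: "\<forall>i\<in>I. k i \<ge> 1" and m: "m > 0"
  shows "has_tau_expansion n Th I (rational_measure I m k) (canonical_coeffs n Th m)"
proof -
  define N where "N = (\<Sum>i\<in>I. k i)"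
  define c where "c = m / (real N * real (Suc n))"
  define W where "W = {0..<N * Suc n}"
  have N: "N \<ge> 1" unfolding N_def by (rule one_le_sum_nat[OF I k])
  have c: "c > 0" unfolding c_def using m N by simp
  have W: "finite W" "W \<noteq> {}" unfolding W_def using N by auto
  obtain b where b: "has_tau_expansion n Th W (uniform_measure W c) b"
    using has_tau_expansion_uniform[OF cong fld[OF W] W c] by blast
  have R: "finite {0..<Suc n}" "{0..<Suc n} \<noteq> {}" "n \<le> card {0..<Suc n}" and mR: "m / real (Suc n) > 0"
    using m by auto
  have "has_tau_expansion n Th {0..<Suc n} (uniform_measure {0..<Suc n} (m / real (Suc n))) b"
    by (rule has_tau_expansion_split[OF cong R(1,2) uniform_measure_Mplus[OF mR] _ _ c W _ b, where k="\<lambda>_. N"])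
      (use N in \<open>auto simp: uniform_measure_def c_def W_def\<close>)
  then have coeffs: "b P = canonical_coeffs n Th m P" if "P \<in> partitions n" for P
    using has_tau_expansion_uniform_unique[OF R(1,3) mR _ has_tau_expansion_canonical_coeffs[OF cong fld m] that]
    by blast
  have "has_tau_expansion n Th I (rational_measure I m k) b"
  proof (rule has_tau_expansion_split[OF cong I rational_measure_Mplus[OF I k m] _ _ c W(1,2) _ b,
        where k="\<lambda>i. k i * Suc n"])
    show "rational_measure I m k i = c * real (k i * Suc n)" if "i \<in> I" for i
      using that N unfolding rational_measure_def c_def N_def[symmetric]
      by (simp add: field_simps del: of_nat_Suc) (simp add: algebra_simps)
    show "card W = (\<Sum>i\<in>I. k i * Suc n)"
      unfolding W_def N_def by (simp add: sum_distrib_right sum.distrib)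
  qed (use k in \<open>auto simp: Suc_le_eq\<close>)
  then show ?thesis using has_tau_expansion_cong coeffs by blast
qed

lemma tendsto_fun_pointwise:
  fixes f :: "'a \<Rightarrow> nat \<Rightarrow> real"
  assumes "\<And>i. ((\<lambda>j. f j i) \<longlongrightarrow> l i) F"
  shows "(f \<longlongrightarrow> l) F"
proof -
  have "limitin (product_topology (\<lambda>i. euclidean) UNIV) f l F"
    unfolding limitin_componentwise using assms by simp
  then show ?thesis unfolding euclidean_product_topology limitin_canonical_iff .
qed

lemma floor_plus_one_div_tendsto:
  assumes "x \<ge> (0::real)"
  shows "(\<lambda>j. real (nat \<lfloor>real (Suc j) * x\<rfloor> + 1) / real (Suc j)) \<longlonglongrightarrow> x"
proof (rule tendsto_sandwich[of "\<lambda>j. x" _ _ "\<lambda>j. x + inverse (real (Suc j))"])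
  have "x \<le> real (nat \<lfloor>real (Suc j) * x\<rfloor> + 1) / real (Suc j) \<and>
        real (nat \<lfloor>real (Suc j) * x\<rfloor> + 1) / real (Suc j) \<le> x + inverse (real (Suc j))" for j
  proof -
    define a where "a = real (Suc j) * x"
    have "real (nat \<lfloor>a\<rfloor> + 1) = of_int \<lfloor>a\<rfloor> + 1" using assms unfolding a_def by simp
    then have "a \<le> real (nat \<lfloor>a\<rfloor> + 1)" "real (nat \<lfloor>a\<rfloor> + 1) \<le> a + 1"
      using floor_correct[of a] by linarith+
    moreover have "x = a / real (Suc j)" "x + inverse (real (Suc j)) = (a + 1) / real (Suc j)"
      unfolding a_def by (simp_all add: field_simps)
    ultimately show ?thesis unfolding a_def[symmetric] by (simp add: divide_right_mono)
  qed
  then show "\<forall>\<^sub>F j in sequentially. x \<le> real (nat \<lfloor>real (Suc j) * x\<rfloor> + 1) / real (Suc j)"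
    and "\<forall>\<^sub>F j in sequentially. real (nat \<lfloor>real (Suc j) * x\<rfloor> + 1) / real (Suc j) \<le> x + inverse (real (Suc j))"
    by simp_all
  show "(\<lambda>j. x + inverse (real (Suc j))) \<longlonglongrightarrow> x"
    using tendsto_add[OF tendsto_const LIMSEQ_inverse_real_of_nat, of x] by simp
qed simp

lemma rational_measure_approx:
  assumes I: "finite I" and mu: "mu \<in> Mplus I"
  obtains k where "\<And>j. \<forall>i\<in>I. k j i \<ge> 1" "\<And>i. (\<lambda>j. rational_measure I (mnorm I mu) (k j) i) \<longlonglongrightarrow> mu i"
proof -
  define k where "k j i = nat \<lfloor>real (Suc j) * mu i\<rfloor> + 1" for j i
  define q where "q j i = real (k j i) / real (Suc j)" for j i
  have mupos: "\<And>i. i \<in> I \<Longrightarrow> mu i > 0" and mu0: "\<And>i. i \<notin> I \<Longrightarrow> mu i = 0"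
    using mu unfolding Mplus_def Sm_def by auto
  have q: "(\<lambda>j. q j i) \<longlonglongrightarrow> mu i" if "i \<in> I" for i
    unfolding q_def k_def using floor_plus_one_div_tendsto mupos[OF that] by simp
  have "rational_measure I (mnorm I mu) (k j) i = mnorm I mu * q j i / (\<Sum>i\<in>I. q j i)" if "i \<in> I" for i j
  proof -
    have "(\<Sum>i\<in>I. q j i) = real (\<Sum>i\<in>I. k j i) / real (Suc j)"
      unfolding q_def by (simp add: sum_divide_distrib)
    then show ?thesis unfolding rational_measure_def q_def using that by (simp add: field_simps)
  qed
  moreover have "(\<lambda>j. mnorm I mu * q j i / (\<Sum>i\<in>I. q j i)) \<longlonglongrightarrow> mu i" if i: "i \<in> I" for i
  proof -
    have "mnorm I mu > 0" using mnorm_pos[OF I _ mu] i by blast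
    moreover have "(\<lambda>j. \<Sum>i\<in>I. q j i) \<longlonglongrightarrow> mnorm I mu"
      unfolding mnorm_Mplus[OF mu] by (intro tendsto_sum q)
    ultimately have "(\<lambda>j. mnorm I mu * q j i / (\<Sum>i\<in>I. q j i)) \<longlonglongrightarrow> mnorm I mu * mu i / mnorm I mu"
      by (intro tendsto_divide tendsto_mult tendsto_const q i) simp_all
    then show ?thesis using \<open>mnorm I mu > 0\<close> by simp
  qed
  ultimately have "(\<lambda>j. rational_measure I (mnorm I mu) (k j) i) \<longlonglongrightarrow> mu i" for i
    by (cases "i \<in> I") (simp_all add: rational_measure_def mu0)
  moreover have "\<forall>i\<in>I. k j i \<ge> 1" for j unfolding k_def by simp
  ultimately show ?thesis using that by blast
qed

lemma has_tau_expansion_Mplus: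
  assumes cong: "congruent_family_M n Th"
    and fld: "\<And>I. finite I \<Longrightarrow> I \<noteq> {} \<Longrightarrow> tensor_field (Mplus I) (Sm I) n (Th I)"
    and I: "finite I" "I \<noteq> {}" and mu: "mu \<in> Mplus I"
  shows "has_tau_expansion n Th I mu (canonical_coeffs n Th (mnorm I mu))"
  unfolding has_tau_expansion_def
proof (intro allI impI)
  fix Vs assume Vs: "length Vs = n \<and> set Vs \<subseteq> Sm I"
  let ?a = "canonical_coeffs n Th (mnorm I mu)"
  obtain k where k: "\<And>j. \<forall>i\<in>I. k j i \<ge> 1"
    and lim: "\<And>i. (\<lambda>j. rational_measure I (mnorm I mu) (k j) i) \<longlonglongrightarrow> mu i"
    using rational_measure_approx[OF I(1) mu] by blast
  define nu where "nu j = rational_measure I (mnorm I mu) (k j)" for j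
  have m: "mnorm I mu > 0" by (rule mnorm_pos[OF I mu])
  have "has_tau_expansion n Th I (nu j) ?a" for j
    unfolding nu_def by (rule has_tau_expansion_rational[OF cong fld I k m])
  then have eq: "Th I (nu j) Vs = (\<Sum>P\<in>partitions n. ?a P * tau_part I (nu j) Vs P)" for j
    using Vs unfolding has_tau_expansion_def by simp
  have "(\<lambda>j. Th I (nu j) Vs) \<longlonglongrightarrow> Th I mu Vs"
  proof (rule continuous_on_tendsto_compose[OF _ tendsto_fun_pointwise mu])
    show "continuous_on (Mplus I) (\<lambda>x. Th I x Vs)" using fld[OF I] Vs unfolding tensor_field_def by blast
    show "\<forall>\<^sub>F j in sequentially. nu j \<in> Mplus I" using rational_measure_Mplus[OF I k m] by (simp add: nu_def)
  qed (use lim in \<open>simp add: nu_def\<close>)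
  moreover have "(\<lambda>j. Th I (nu j) Vs) \<longlonglongrightarrow> (\<Sum>P\<in>partitions n. ?a P * tau_part I mu Vs P)"
    unfolding eq using mu lim unfolding Mplus_def
    by (intro tendsto_sum tendsto_mult tendsto_const tau_part_tendsto I(1)) (auto simp: nu_def)
  ultimately show "Th I mu Vs = (\<Sum>P\<in>partitions n. ?a P * tau_part I mu Vs P)"
    by (rule LIMSEQ_unique)
qed

lemma congruent_family_M_if_expansion:
  assumes "\<forall>I. finite I \<and> I \<noteq> {} \<longrightarrow> (\<forall>mu\<in>Mplus I. \<forall>Vs. length Vs = n \<and> set Vs \<subseteq> Sm I \<longrightarrow>
       Th I mu Vs = (\<Sum>P\<in>partitions n. a P (mnorm I mu) * tau_part I mu Vs P))"
  shows "congruent_family_M n Th"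
  unfolding congruent_family_M_def
proof (intro allI impI ballI)
  have expansion: "Th J nu Ws = (\<Sum>P\<in>partitions n. a P (mnorm J nu) * tau_part J nu Ws P)"
    if "finite J" "J \<noteq> {}" "nu \<in> Mplus J" "length Ws = n" "set Ws \<subseteq> Sm J" for J nu Ws
    using assms that by blast
  fix I I' K mu Vs
  assume "finite I \<and> I \<noteq> {} \<and> finite I' \<and> I' \<noteq> {} \<and> congruent_kernel I I' K \<and> push I I' K ` Mplus I \<subseteq> Mplus I'"
    and mu: "mu \<in> Mplus I" and Vs: "length Vs = n \<and> set Vs \<subseteq> Sm I"
  then have I: "finite I" "I \<noteq> {}" "finite I'" "I' \<noteq> {}" and K: "congruent_kernel I I' K"
    and pmu: "push I I' K mu \<in> Mplus I'" by auto
  have "set (map (push I I' K) Vs) \<subseteq> Sm I'" using push_Sm by auto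
  then have "Th I' (push I I' K mu) (map (push I I' K) Vs) =
      (\<Sum>P\<in>partitions n. a P (mnorm I' (push I I' K mu)) * tau_part I' (push I I' K mu) (map (push I I' K) Vs) P)"
    using expansion[OF I(3,4) pmu] Vs by simp
  also have "\<dots> = (\<Sum>P\<in>partitions n. a P (mnorm I mu) * tau_part I mu Vs P)"
    unfolding mnorm_push[OF K I(3) mu pmu] using sum_tau_part_push[OF I(1,3) K mu pmu] Vs by simp
  also have "\<dots> = Th I mu Vs" using expansion[OF I(1,2) mu] Vs by simp
  finally show "Th I' (push I I' K mu) (map (push I I' K) Vs) = Th I mu Vs" .
qed

theorem congruent_family_M_iff_expansion:
  assumes fld: "\<And>I. finite I \<Longrightarrow> I \<noteq> {} \<Longrightarrow> tensor_field (Mplus I) (Sm I) n (Th I)"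
  shows "congruent_family_M n Th \<longleftrightarrow>
    (\<exists>a :: nat set set \<Rightarrow> real \<Rightarrow> real. \<forall>I. finite I \<and> I \<noteq> {} \<longrightarrow>
       (\<forall>mu\<in>Mplus I. \<forall>Vs. length Vs = n \<and> set Vs \<subseteq> Sm I \<longrightarrow>
          Th I mu Vs = (\<Sum>P\<in>partitions n. a P (mnorm I mu) * tau_part I mu Vs P)))"
proof
  assume cong: "congruent_family_M n Th"
  show "\<exists>a :: nat set set \<Rightarrow> real \<Rightarrow> real. \<forall>I. finite I \<and> I \<noteq> {} \<longrightarrow>
       (\<forall>mu\<in>Mplus I. \<forall>Vs. length Vs = n \<and> set Vs \<subseteq> Sm I \<longrightarrow>
          Th I mu Vs = (\<Sum>P\<in>partitions n. a P (mnorm I mu) * tau_part I mu Vs P))"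
    using has_tau_expansion_Mplus[OF cong fld] unfolding has_tau_expansion_def
    by (intro exI[of _ "\<lambda>P m. canonical_coeffs n Th m P"]) blast
qed (blast intro: congruent_family_M_if_expansion)

section \<open>Congruent families on probability measures\<close>

definition normalize_measure :: "nat set \<Rightarrow> (nat \<Rightarrow> real) \<Rightarrow> nat \<Rightarrow> real" where
  "normalize_measure I mu = (\<lambda>i. mu i / mnorm I mu)"

definition tangent_proj :: "nat set \<Rightarrow> (nat \<Rightarrow> real) \<Rightarrow> (nat \<Rightarrow> real) \<Rightarrow> nat \<Rightarrow> real" where
  "tangent_proj I mu V = (\<lambda>i. V i - (\<Sum>j\<in>I. V j) * mu i / mnorm I mu)"

definition cone_extension ::
  "(nat set \<Rightarrow> (nat \<Rightarrow> real) \<Rightarrow> (nat \<Rightarrow> real) list \<Rightarrow> real) \<Rightarrow> nat set \<Rightarrow> (nat \<Rightarrow> real) \<Rightarrow> (nat \<Rightarrow> real) list \<Rightarrow> real" where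
  "cone_extension Th I mu Vs = Th I (normalize_measure I mu) (map (tangent_proj I mu) Vs)"

lemma normalize_measure_Pplus:
  assumes "finite I" "I \<noteq> {}" "mu \<in> Mplus I"
  shows "normalize_measure I mu \<in> Pplus I"
  using mnorm_pos[OF assms] mnorm_Mplus[OF assms(3)] assms(3)
  unfolding Pplus_def Mplus_def Sm_def normalize_measure_def by (auto simp: sum_divide_distrib[symmetric])

lemma normalize_measure_Pplus_eq: "mu \<in> Pplus I \<Longrightarrow> normalize_measure I mu = mu"
  unfolding normalize_measure_def Pplus_def Mplus_def mnorm_def by (auto simp: abs_of_pos)

lemma tangent_proj_S0:
  assumes "finite I" "I \<noteq> {}" "mu \<in> Mplus I" "V \<in> Sm I"
  shows "tangent_proj I mu V \<in> S0 I"
proof -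
  have "(\<Sum>i\<in>I. tangent_proj I mu V i) = (\<Sum>i\<in>I. V i) - (\<Sum>j\<in>I. V j) * ((\<Sum>i\<in>I. mu i) / mnorm I mu)"
    unfolding tangent_proj_def by (simp add: sum_subtractf sum_distrib_left sum_divide_distrib)
  also have "(\<Sum>i\<in>I. mu i) / mnorm I mu = 1" using mnorm_pos[OF assms(1-3)] mnorm_Mplus[OF assms(3)] by simp
  finally show ?thesis using assms(3,4) unfolding S0_def Sm_def Mplus_def tangent_proj_def by auto
qed

lemma tangent_proj_S0_eq: "V \<in> S0 I \<Longrightarrow> tangent_proj I mu V = V"
  unfolding tangent_proj_def S0_def by simp

lemma tangent_proj_lincomb:
  "tangent_proj I mu (\<lambda>i. a * v i + b * w i) = (\<lambda>i. a * tangent_proj I mu v i + b * tangent_proj I mu w i)"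
  unfolding tangent_proj_def by (rule ext) (simp add: sum.distrib sum_distrib_left algebra_simps add_divide_distrib)

lemma push_normalize_measure:
  assumes "congruent_kernel I I' K" "finite I'" "mu \<in> Mplus I" "push I I' K mu \<in> Mplus I'"
  shows "normalize_measure I' (push I I' K mu) = push I I' K (normalize_measure I mu)"
  unfolding normalize_measure_def mnorm_push[OF assms] by (rule ext) (simp add: push_def sum_divide_distrib)

lemma push_tangent_proj:
  assumes "congruent_kernel I I' K" "finite I'" "mu \<in> Mplus I" "push I I' K mu \<in> Mplus I'"
  shows "tangent_proj I' (push I I' K mu) (push I I' K V) = push I I' K (tangent_proj I mu V)"
proof
  fix i'
  obtain s M where s: "s = (\<Sum>j\<in>I. V j)" and M: "M = mnorm I mu" by blast
  have "(\<Sum>i\<in>I. K i i' * (V i - s * mu i / M)) = (\<Sum>i\<in>I. K i i' * V i) - s * (\<Sum>i\<in>I. K i i' * mu i) / M"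
    by (simp add: right_diff_distrib sum_subtractf sum_distrib_left sum_divide_distrib mult_ac)
  then show "tangent_proj I' (push I I' K mu) (push I I' K V) i' = push I I' K (tangent_proj I mu V) i'"
    unfolding tangent_proj_def mnorm_push[OF assms] sum_push[OF assms(1,2)] s[symmetric] M[symmetric]
    by (simp add: push_def)
qed

lemma congruent_family_PD:
  assumes "congruent_family_P n Th" "finite I" "I \<noteq> {}" "finite I'" "I' \<noteq> {}" "congruent_kernel I I' K"
    "push I I' K ` Pplus I \<subseteq> Pplus I'" "mu \<in> Pplus I" "length Vs = n" "set Vs \<subseteq> S0 I"
  shows "Th I' (push I I' K mu) (map (push I I' K) Vs) = Th I mu Vs"
  using assms unfolding congruent_family_P_def by blast

lemma congruent_family_M_cone_extension:
  assumes cong: "congruent_family_P n Th"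
  shows "congruent_family_M n (cone_extension Th)"
  unfolding congruent_family_M_def
proof (intro allI impI ballI)
  fix I I' K mu Vs
  assume "finite I \<and> I \<noteq> {} \<and> finite I' \<and> I' \<noteq> {} \<and> congruent_kernel I I' K \<and> push I I' K ` Mplus I \<subseteq> Mplus I'"
    and mu: "mu \<in> Mplus I" and Vs: "length Vs = n \<and> set Vs \<subseteq> Sm I"
  then have I: "finite I" "I \<noteq> {}" "finite I'" "I' \<noteq> {}" and K: "congruent_kernel I I' K"
    and KM: "push I I' K ` Mplus I \<subseteq> Mplus I'" by auto
  have pmu: "push I I' K mu \<in> Mplus I'" using KM mu by auto
  have "cone_extension Th I' (push I I' K mu) (map (push I I' K) Vs) =
      Th I' (push I I' K (normalize_measure I mu)) (map (push I I' K) (map (tangent_proj I mu) Vs))"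
    unfolding cone_extension_def push_normalize_measure[OF K I(3) mu pmu]
    by (simp add: push_tangent_proj[OF K I(3) mu pmu] comp_def)
  also have "\<dots> = Th I (normalize_measure I mu) (map (tangent_proj I mu) Vs)"
    by (rule congruent_family_PD[OF cong I K push_Pplus[OF K I(3) KM] normalize_measure_Pplus[OF I(1,2) mu]])
      (use Vs tangent_proj_S0[OF I(1,2) mu] in auto)
  finally show "cone_extension Th I' (push I I' K mu) (map (push I I' K) Vs) = cone_extension Th I mu Vs"
    unfolding cone_extension_def .
qed

lemma S0_dirac_expansion:
  assumes "finite I" "i0 \<in> I" "W \<in> S0 I"
  shows "W = (\<lambda>i. \<Sum>j\<in>I - {i0}. W j * (dirac j i - dirac i0 i))"
proof
  fix i
  have "(\<Sum>j\<in>I - {i0}. W j * (dirac j i - dirac i0 i)) = (\<Sum>j\<in>I - {i0}. W j * dirac j i) - (\<Sum>j\<in>I - {i0}. W j) * dirac i0 i"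
    by (simp add: right_diff_distrib sum_subtractf sum_distrib_right)
  also have "(\<Sum>j\<in>I - {i0}. W j) = - W i0"
    using assms unfolding S0_def by (simp add: sum_diff1)
  also have "(\<Sum>j\<in>I - {i0}. W j * dirac j i) = (if i \<in> I - {i0} then W i else 0)"
    using assms(1) by (simp add: dirac_def if_distrib sum.delta cong: if_cong)
  finally show "W i = (\<Sum>j\<in>I - {i0}. W j * (dirac j i - dirac i0 i))"
    using assms(3) unfolding S0_def Sm_def dirac_def by auto
qed

lemma cone_extension_multilinear_on:
  assumes fld: "tensor_field (Pplus I) (S0 I) n (Th I)" and I: "finite I" "I \<noteq> {}" and mu: "mu \<in> Mplus I"
  shows "multilinear_on (Sm I) n (cone_extension Th I mu)"
  unfolding multilinear_on_def
proof (intro allI impI)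
  fix Vs k v w a b
  assume h: "length Vs = n \<and> set Vs \<subseteq> Sm I \<and> k < n \<and> v \<in> Sm I \<and> w \<in> Sm I"
  then have "set (map (tangent_proj I mu) Vs) \<subseteq> S0 I" "tangent_proj I mu v \<in> S0 I" "tangent_proj I mu w \<in> S0 I"
    using tangent_proj_S0[OF I mu] by auto
  then show "cone_extension Th I mu (Vs[k := (\<lambda>i. a * v i + b * w i)]) =
      a * cone_extension Th I mu (Vs[k := v]) + b * cone_extension Th I mu (Vs[k := w])"
    using tensor_field_multilinear_on[OF fld normalize_measure_Pplus[OF I mu]] h
    unfolding cone_extension_def map_update tangent_proj_lincomb multilinear_on_def by simp
qed

lemma cone_extension_expand:
  assumes fld: "tensor_field (Pplus I) (S0 I) n (Th I)" and I: "finite I" "i0 \<in> I"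
    and mu: "mu \<in> Mplus I" and Vs: "length Vs = n" "set Vs \<subseteq> Sm I"
  shows "cone_extension Th I mu Vs = (\<Sum>g\<in>PiE {0..<n} (\<lambda>_. I - {i0}). (\<Prod>k<n. tangent_proj I mu (Vs ! k) (g k)) *
       Th I (normalize_measure I mu) (map (\<lambda>k. \<lambda>i. dirac (g k) i - dirac i0 i) [0..<n]))"
  unfolding cone_extension_def
proof (rule multilinear_on_expand[OF tensor_field_multilinear_on[OF fld] lincomb_closed_S0])
  have I': "I \<noteq> {}" using I(2) by blast
  show "normalize_measure I mu \<in> Pplus I" by (rule normalize_measure_Pplus[OF I(1) I' mu])
  show "set (map (tangent_proj I mu) Vs) \<subseteq> S0 I" using tangent_proj_S0[OF I(1) I' mu] Vs by auto
  show "(\<lambda>i. dirac j i - dirac i0 i) \<in> S0 I" if "j \<in> I - {i0}" for j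
    using that I unfolding S0_def Sm_def dirac_def by (auto simp: sum_subtractf)
  show "map (tangent_proj I mu) Vs ! k = (\<lambda>i. \<Sum>j\<in>I - {i0}. tangent_proj I mu (Vs ! k) j * (dirac j i - dirac i0 i))"
    if "k < n" for k
    using S0_dirac_expansion[OF I tangent_proj_S0[OF I(1) I' mu]] Vs that by (simp add: subset_iff)
qed (use Vs I in auto)

lemma cone_extension_tensor_field:
  assumes fld: "tensor_field (Pplus I) (S0 I) n (Th I)" and I: "finite I" "I \<noteq> {}"
  shows "tensor_field (Mplus I) (Sm I) n (cone_extension Th I)"
proof -
  obtain i0 where i0: "i0 \<in> I" using I(2) by blast
  have coord: "continuous_on (Mplus I) (\<lambda>mu. mu j)" for j
    by (rule continuous_on_subset[OF continuous_on_product_coordinates]) auto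
  have mnorm: "continuous_on (Mplus I) (\<lambda>mu. mnorm I mu)"
    unfolding mnorm_def by (intro continuous_intros coord)
  have nonzero: "\<forall>mu\<in>Mplus I. mnorm I mu \<noteq> 0" using mnorm_pos[OF I] by fastforce
  have proj: "continuous_on (Mplus I) (\<lambda>mu. tangent_proj I mu V j)" for V j
    unfolding tangent_proj_def by (intro continuous_intros coord mnorm nonzero)
  have normalize: "continuous_on (Mplus I) (normalize_measure I)"
    unfolding normalize_measure_def by (intro continuous_on_coordinatewise_then_product continuous_intros coord mnorm nonzero)
  have Th: "continuous_on (Mplus I) (\<lambda>mu. Th I (normalize_measure I mu) Ws)"
    if "length Ws = n" "set Ws \<subseteq> S0 I" for Ws
  proof (rule continuous_on_compose2[OF _ normalize])
    show "continuous_on (Pplus I) (\<lambda>nu. Th I nu Ws)" using fld that unfolding tensor_field_def by blast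
    show "normalize_measure I ` Mplus I \<subseteq> Pplus I" using normalize_measure_Pplus[OF I] by blast
  qed
  show ?thesis
  proof (rule tensor_fieldI)
    fix Vs assume Vs: "length Vs = n" "set Vs \<subseteq> Sm I"
    have "(\<lambda>i. dirac j i - dirac i0 i) \<in> S0 I" if "j \<in> I - {i0}" for j
      using that I(1) i0 unfolding S0_def Sm_def dirac_def by (auto simp: sum_subtractf)
    then have "continuous_on (Mplus I) (\<lambda>mu. \<Sum>g\<in>PiE {0..<n} (\<lambda>_. I - {i0}). (\<Prod>k<n. tangent_proj I mu (Vs ! k) (g k)) *
       Th I (normalize_measure I mu) (map (\<lambda>k. \<lambda>i. dirac (g k) i - dirac i0 i) [0..<n]))"
      by (intro continuous_on_sum continuous_on_mult continuous_on_prod proj Th) (auto simp: PiE_iff)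
    then show "continuous_on (Mplus I) (\<lambda>mu. cone_extension Th I mu Vs)"
      using cone_extension_expand[where Th=Th, OF fld I(1) i0 _ Vs] by (simp cong: continuous_on_cong)
  qed (rule cone_extension_multilinear_on[where Th=Th, OF fld I])
qed

lemma congruent_family_P_if_expansion:
  assumes "\<forall>I. finite I \<and> I \<noteq> {} \<longrightarrow> (\<forall>mu\<in>Pplus I. \<forall>Vs. length Vs = n \<and> set Vs \<subseteq> S0 I \<longrightarrow>
       Th I mu Vs = (\<Sum>P\<in>Q. c P * tau_part I mu Vs P))"
    and Q: "Q \<subseteq> partitions n"
  shows "congruent_family_P n Th"
  unfolding congruent_family_P_def
proof (intro allI impI ballI)
  have expansion: "Th J nu Ws = (\<Sum>P\<in>Q. c P * tau_part J nu Ws P)"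
    if "finite J" "J \<noteq> {}" "nu \<in> Pplus J" "length Ws = n" "set Ws \<subseteq> S0 J" for J nu Ws
    using assms(1) that by blast
  fix I I' K mu Vs
  assume "finite I \<and> I \<noteq> {} \<and> finite I' \<and> I' \<noteq> {} \<and> congruent_kernel I I' K \<and> push I I' K ` Pplus I \<subseteq> Pplus I'"
    and mu: "mu \<in> Pplus I" and Vs: "length Vs = n \<and> set Vs \<subseteq> S0 I"
  then have I: "finite I" "I \<noteq> {}" "finite I'" "I' \<noteq> {}" and K: "congruent_kernel I I' K"
    and pmu: "push I I' K mu \<in> Pplus I'" by auto
  have "set (map (push I I' K) Vs) \<subseteq> S0 I'" using push_S0[OF K I(3)] Vs by auto
  then have "Th I' (push I I' K mu) (map (push I I' K) Vs) =
      (\<Sum>P\<in>Q. c P * tau_part I' (push I I' K mu) (map (push I I' K) Vs) P)"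
    using expansion[OF I(3,4) pmu] Vs by simp
  also have "\<dots> = (\<Sum>P\<in>Q. c P * tau_part I mu Vs P)"
    using tau_part_push[OF I(1,3) K] mu pmu Vs Q unfolding Pplus_def by (intro sum.cong) auto
  also have "\<dots> = Th I mu Vs" using expansion[OF I(1,2) mu] Vs by simp
  finally show "Th I' (push I I' K mu) (map (push I I' K) Vs) = Th I mu Vs" .
qed

lemma sum_tau_part_S0:
  assumes "length Vs = n" "set Vs \<subseteq> S0 I"
  shows "(\<Sum>P\<in>partitions n. a P * tau_part I mu Vs P) =
    (\<Sum>P\<in>{P \<in> partitions n. \<forall>B\<in>P. card B > 1}. a P * tau_part I mu Vs P)"
proof (rule sum.mono_neutral_right[OF finite_partitions])
  show "\<forall>P\<in>partitions n - {P \<in> partitions n. \<forall>B\<in>P. card B > 1}. a P * tau_part I mu Vs P = 0"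
  proof
    fix P assume "P \<in> partitions n - {P \<in> partitions n. \<forall>B\<in>P. card B > 1}"
    then obtain B where P: "P \<in> partitions n" and B: "B \<in> P" "card B \<le> 1" by auto
    then have "card B = 1" using partition_blockD[OF P B(1)] by (simp add: le_Suc_eq card_0_eq)
    then obtain k where "B = {k}" by (rule card_1_singletonE)
    then show "a P * tau_part I mu Vs P = 0" using tau_part_singleton_S0[OF P _ assms] B(1) by simp
  qed
qed auto

lemma congruent_family_P_expansion:
  assumes cong: "congruent_family_P n Th"
    and fld: "\<And>I. finite I \<Longrightarrow> I \<noteq> {} \<Longrightarrow> tensor_field (Pplus I) (S0 I) n (Th I)"
    and I: "finite I" "I \<noteq> {}" and mu: "mu \<in> Pplus I" and Vs: "length Vs = n" "set Vs \<subseteq> S0 I"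
  shows "Th I mu Vs = (\<Sum>P\<in>{P \<in> partitions n. \<forall>B\<in>P. card B > 1}.
    canonical_coeffs n (cone_extension Th) 1 P * tau_part I mu Vs P)"
proof -
  have fldM: "tensor_field (Mplus I) (Sm I) n (cone_extension Th I)" if "finite I" "I \<noteq> {}" for I
    by (rule cone_extension_tensor_field[where Th=Th, OF fld[OF that] that])
  have muM: "mu \<in> Mplus I" and norm: "mnorm I mu = 1" using mu mnorm_Mplus unfolding Pplus_def by auto
  have "set Vs \<subseteq> Sm I" using Vs(2) unfolding S0_def by auto
  have "Th I mu Vs = cone_extension Th I mu Vs"
    unfolding cone_extension_def normalize_measure_Pplus_eq[OF mu]
    using Vs(2) tangent_proj_S0_eq by (simp add: map_idI subset_iff)
  also have "\<dots> = (\<Sum>P\<in>partitions n. canonical_coeffs n (cone_extension Th) 1 P * tau_part I mu Vs P)"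
    using has_tau_expansion_Mplus[OF congruent_family_M_cone_extension[OF cong] fldM I muM] Vs \<open>set Vs \<subseteq> Sm I\<close>
    unfolding has_tau_expansion_def norm by simp
  finally show ?thesis unfolding sum_tau_part_S0[OF Vs] .
qed

theorem congruent_family_P_iff_expansion:
  assumes fld: "\<And>I. finite I \<Longrightarrow> I \<noteq> {} \<Longrightarrow> tensor_field (Pplus I) (S0 I) n (Th I)"
  shows "congruent_family_P n Th \<longleftrightarrow>
    (\<exists>c :: nat set set \<Rightarrow> real. \<forall>I. finite I \<and> I \<noteq> {} \<longrightarrow>
       (\<forall>mu\<in>Pplus I. \<forall>Vs. length Vs = n \<and> set Vs \<subseteq> S0 I \<longrightarrow>
          Th I mu Vs = (\<Sum>P\<in>{P \<in> partitions n. \<forall>B\<in>P. card B > 1}. c P * tau_part I mu Vs P)))"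
proof
  assume cong: "congruent_family_P n Th"
  show "\<exists>c :: nat set set \<Rightarrow> real. \<forall>I. finite I \<and> I \<noteq> {} \<longrightarrow>
       (\<forall>mu\<in>Pplus I. \<forall>Vs. length Vs = n \<and> set Vs \<subseteq> S0 I \<longrightarrow>
          Th I mu Vs = (\<Sum>P\<in>{P \<in> partitions n. \<forall>B\<in>P. card B > 1}. c P * tau_part I mu Vs P))"
    using congruent_family_P_expansion[OF cong fld]
    by (intro exI[of _ "canonical_coeffs n (cone_extension Th) 1"] allI impI ballI) auto
next
  assume "\<exists>c :: nat set set \<Rightarrow> real. \<forall>I. finite I \<and> I \<noteq> {} \<longrightarrow>
       (\<forall>mu\<in>Pplus I. \<forall>Vs. length Vs = n \<and> set Vs \<subseteq> S0 I \<longrightarrow>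
          Th I mu Vs = (\<Sum>P\<in>{P \<in> partitions n. \<forall>B\<in>P. card B > 1}. c P * tau_part I mu Vs P))"
  then obtain c where "\<forall>I. finite I \<and> I \<noteq> {} \<longrightarrow>
       (\<forall>mu\<in>Pplus I. \<forall>Vs. length Vs = n \<and> set Vs \<subseteq> S0 I \<longrightarrow>
          Th I mu Vs = (\<Sum>P\<in>{P \<in> partitions n. \<forall>B\<in>P. card B > 1}. c P * tau_part I mu Vs P))" ..
  then show "congruent_family_P n Th" by (rule congruent_family_P_if_expansion) auto
qed

theorem theorem4p3:
  fixes n :: nat
    and ThM :: "nat set \<Rightarrow> (nat \<Rightarrow> real) \<Rightarrow> (nat \<Rightarrow> real) list \<Rightarrow> real"
    and ThP :: "nat set \<Rightarrow> (nat \<Rightarrow> real) \<Rightarrow> (nat \<Rightarrow> real) list \<Rightarrow> real"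
  assumes fieldM: "\<And>I. finite I \<Longrightarrow> I \<noteq> {} \<Longrightarrow> tensor_field (Mplus I) (Sm I) n (ThM I)"
    and fieldP: "\<And>I. finite I \<Longrightarrow> I \<noteq> {} \<Longrightarrow> tensor_field (Pplus I) (S0 I) n (ThP I)"
  shows "(congruent_family_M n ThM \<longleftrightarrow>
            (\<exists>a :: nat set set \<Rightarrow> real \<Rightarrow> real.
               \<forall>I. finite I \<and> I \<noteq> {} \<longrightarrow>
                 (\<forall>mu\<in>Mplus I. \<forall>Vs. length Vs = n \<and> set Vs \<subseteq> Sm I \<longrightarrow>
                    ThM I mu Vs = (\<Sum>P\<in>partitions n. a P (mnorm I mu) * tau_part I mu Vs P))))
       \<and> (congruent_family_P n ThP \<longleftrightarrow>
            (\<exists>c :: nat set set \<Rightarrow> real.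
               \<forall>I. finite I \<and> I \<noteq> {} \<longrightarrow>
                 (\<forall>mu\<in>Pplus I. \<forall>Vs. length Vs = n \<and> set Vs \<subseteq> S0 I \<longrightarrow>
                    ThP I mu Vs = (\<Sum>P\<in>{P \<in> partitions n. \<forall>B\<in>P. card B > 1}.
                                     c P * tau_part I mu Vs P))))"
  using congruent_family_M_iff_expansion[OF fieldM] congruent_family_P_iff_expansion[OF fieldP] by (rule conjI)

end
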